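(* Let $d \geq 1$. There is a constant $c_d > 0$ depending only on $d$ such that the following holds. Let $t > 0$ and let $(x_n)_{n=1}^{\infty}$ be a sequence in $\mathbb{T}^d$ satisfying $$ \lim_{N \rightarrow \infty}{ \frac{1}{N} \# \left\{ 1 \leq m \neq n \leq N: \|x_m - x_n\|_2 \leq \frac{s}{N^{1/d}} \right\}} = \omega_d s^d$$ for all $0 < s < t$. Then $$\limsup_{N \rightarrow \infty} \sum_{\ell \in \mathbb{Z}^d,\ 1 \leq \| \ell \|_2 \leq t^{-1} N^{1/d}}^{}{ \frac{1}{N^2} \left| \sum_{k=1}^{N}{e^{2 \pi i \langle \ell, x_k\rangle}} \right|^2} \leq \frac{c_d}{t^d}.$$
   Context: $\mathbb{T}^d = \mathbb{R}^d/\mathbb{Z}^d$ is the $d$-dimensional torus, normalized to have volume 1. $\|x_m - x_n\|_2$ denotes the Euclidean distance on the torus, i.e. the minimum of $\|y\|_2$ over all representatives $y \in \mathbb{R}^d$ of $x_m - x_n$. $\omega_d$ denotes the volume of the Euclidean unit ball in $\mathbb{R}^d$. $\langle \cdot,\cdot\rangle$ is the standard inner product. *)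

theory Defs
  imports "HOL-Analysis.Analysis"
begin

text \<open>Points of the torus R^d/Z^d are represented by arbitrary representatives in real^'d.\<close>

definition int_lattice :: "(real^'d) set" where
  "int_lattice = {v. \<forall>i. v $ i \<in> \<int>}"

definition torus_dist :: "real^'d \<Rightarrow> real^'d \<Rightarrow> real" where
  "torus_dist x y = Inf {norm (x - y - k) | k. k \<in> int_lattice}"

definition unit_ball_vol :: "'d::finite itself \<Rightarrow> real" where
  "unit_ball_vol _ = measure lborel (ball (0::real^'d) 1)"

definition close_pairs :: "(nat \<Rightarrow> real^'d::finite) \<Rightarrow> real \<Rightarrow> nat \<Rightarrow> nat" where
  "close_pairs x s N = card {(m, n). m \<in> {1..N} \<and> n \<in> {1..N} \<and> m \<noteq> n \<and>
      torus_dist (x m) (x n) \<le> s / (real N powr (1 / real CARD('d)))}"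

definition exp_sum_energy :: "(nat \<Rightarrow> real^'d::finite) \<Rightarrow> real \<Rightarrow> nat \<Rightarrow> real" where
  "exp_sum_energy x t N =
     (\<Sum>l\<in>{l \<in> int_lattice. 1 \<le> norm l \<and> norm l \<le> real N powr (1 / real CARD('d)) / t}.
        (norm (\<Sum>k=1..N. exp (complex_of_real (2 * pi * (l \<bullet> x k)) * \<i>)))\<^sup>2 / (real N)\<^sup>2)"

end

(*
  Let rho = tau N^(-1/d) with tau = t/6 and let f be the sum of the indicators of the balls of
  radius rho around x_1, ..., x_N in the torus. With e(s) = exp(2 pi i s), its Fourier
  coefficients are f^(l) = b^(l) * sum_k e(-<l, x_k>), where b^ is the Fourier transform of the
  indicator of B_rho, and |b^(l)| >= |B_rho|/2 whenever |l| rho <= 1/6, i.e. for |l| <= N^(1/d)/t.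
  Bessel's inequality therefore bounds |B_rho|^2 N^2 + (|B_rho|/2)^2 sum_l |sum_k e(<l, x_k>)|^2
  by ||f||^2 = N |B_rho| + sum_{k /= k'} |B_rho(x_k) /\ B_rho(x_k')|.
  The lens volume |B_rho(0) /\ B_rho(y)| is a radial, decreasing function of y that vanishes for
  |y| >= 2 rho. Bounding it above by a step function of |y| with M steps turns the pair sum into a
  combination of pair counts at scales s N^(-1/d) with s < t, which the hypothesis evaluates; the
  matching step function below the lens shows that the result is
  N^2 |B_rho|^2 (1 + O(1/M)) + o(N^2 |B_rho|^2). The main terms cancel, leaving
  O(1 / (N |B_rho|)) = O(t^(-d)).
*)
theory Submission
  imports Defs
begin

section \<open>Orthogonal invariance of Lebesgue measure\<close>

text \<open>The library proves that orthogonal maps preserve Lebesgue measure only for index types of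
  class \<^class>\<open>wellorder\<close>; we transfer this along a wellordered copy of an arbitrary finite type.\<close>

typedef ('a::finite) ordered_copy = "UNIV :: 'a set" by simp

instantiation ordered_copy :: (finite) linorder
begin

definition less_eq_ordered_copy :: "'a ordered_copy \<Rightarrow> 'a ordered_copy \<Rightarrow> bool" where
  "x \<le> y \<longleftrightarrow> to_nat (Rep_ordered_copy x) \<le> to_nat (Rep_ordered_copy y)"

definition less_ordered_copy :: "'a ordered_copy \<Rightarrow> 'a ordered_copy \<Rightarrow> bool" where
  "x < y \<longleftrightarrow> to_nat (Rep_ordered_copy x) < to_nat (Rep_ordered_copy y)"

instance
  by standard (auto simp: less_eq_ordered_copy_def less_ordered_copy_def
      Rep_ordered_copy_inject[symmetric] dest: injD[OF inj_to_nat])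

end

instance ordered_copy :: (finite) finite
  by standard (metis finite_imageI finite type_definition.Abs_image type_definition_ordered_copy)

instance ordered_copy :: (finite) wellorder
proof
  fix P :: "'a ordered_copy \<Rightarrow> bool" and a
  assume step: "\<And>x. (\<And>y. y < x \<Longrightarrow> P y) \<Longrightarrow> P x"
  show "P a"
    by (induction "to_nat (Rep_ordered_copy a)" arbitrary: a rule: less_induct)
       (metis step less_ordered_copy_def)
qed

lemma borel_measurable_linear:
  fixes f :: "'a::euclidean_space \<Rightarrow> 'b::euclidean_space"
  shows "linear f \<Longrightarrow> f \<in> borel_measurable borel"
  by (intro borel_measurable_continuous_onI linear_continuous_on) (simp add: linear_conv_bounded_linear)

lemma prod_Basis_vec: "(\<Prod>b\<in>Basis. x \<bullet> b) = (\<Prod>i\<in>UNIV. (x :: real^'n) $ i)"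
  by (simp add: Basis_vec_def cart_eq_inner_axis axis_eq_axis prod.UNION_disjoint)

lemma emeasure_lborel_box_cart:
  fixes l u :: "real^'n"
  assumes "\<And>i. l $ i \<le> u $ i"
  shows "emeasure lborel (box l u) = (\<Prod>i\<in>UNIV. u $ i - l $ i)"
proof -
  have "\<forall>b\<in>Basis. l \<bullet> b \<le> u \<bullet> b"
    using assms by (auto simp: Basis_vec_def inner_axis)
  then show ?thesis
    using prod_Basis_vec[of "u - l"] by (simp add: emeasure_lborel_box_eq inner_diff_left)
qed

lemma lborel_distr_reindex:
  fixes \<sigma> :: "'m::finite \<Rightarrow> 'n::finite"
  assumes "bij \<sigma>"
  shows "distr lborel borel (\<lambda>v::real^'n. \<chi> j. v $ \<sigma> j) = (lborel :: (real^'m) measure)"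
proof (rule lborel_eqI[symmetric])
  let ?P = "\<lambda>v::real^'n. \<chi> j. v $ \<sigma> j"
  let ?Q = "\<lambda>w::real^'m. \<chi> i. w $ inv \<sigma> i"
  have [measurable]: "?P \<in> borel_measurable borel"
    by (intro borel_measurable_linear) (auto simp: linear_iff vec_eq_iff)
  fix l u :: "real^'m"
  assume lu: "\<And>b. b \<in> Basis \<Longrightarrow> l \<bullet> b \<le> u \<bullet> b"
  have le: "l $ i \<le> u $ i" for i
    using lu[of "axis i 1"] by (simp add: cart_eq_inner_axis)
  have "?P -` box l u = box (?Q l) (?Q u)"
    using assms unfolding bij_def
    by (auto simp: mem_box_cart) (metis inv_f_f surj_f_inv_f)+
  then have "emeasure (distr lborel borel ?P) (box l u) = (\<Prod>i\<in>UNIV. u $ inv \<sigma> i - l $ inv \<sigma> i)"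
    using le by (simp add: emeasure_distr emeasure_lborel_box_cart)
  also have "\<dots> = (\<Prod>i\<in>UNIV. (u - l) $ i)"
    using prod.reindex_bij_betw[OF bij_betw_inv_into[OF assms], of "\<lambda>j. (u - l) $ j"]
    by simp
  finally show "emeasure (distr lborel borel ?P) (box l u) = (\<Prod>b\<in>Basis. (u - l) \<bullet> b)"
    by (simp only: prod_Basis_vec)
qed (simp)

lemma lborel_distr_orthogonal_wellorder:
  fixes f :: "real^'n::{finite,wellorder} \<Rightarrow> real^'n::_"
  assumes f: "orthogonal_transformation f"
  shows "distr lborel borel f = lborel"
proof (rule lborel_eqI[symmetric])
  have [measurable]: "f \<in> borel_measurable borel"
    by (rule borel_measurable_linear[OF orthogonal_transformation_linear[OF f]])
  fix l u :: "real^'n::{finite,wellorder}"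
  assume "\<And>b. b \<in> Basis \<Longrightarrow> l \<bullet> b \<le> u \<bullet> b"
  then have box: "emeasure lborel (box l u) = (\<Prod>b\<in>Basis. (u - l) \<bullet> b)"
    by (simp add: emeasure_lborel_box_eq inner_diff_left)
  have "f -` box l u \<in> sets lborel"
    using measurable_sets_borel[of f borel "box l u"] by simp
  then have "emeasure (distr lborel borel f) (box l u) = emeasure lebesgue (inv f ` box l u)"
    by (simp add: emeasure_distr emeasure_completion bij_vimage_eq_inv_image
        orthogonal_transformation_bij[OF f])
  also have "\<dots> = measure lebesgue (box l u)"
    using measurable_orthogonal_image[OF orthogonal_transformation_inv[OF f], of "box l u"]
      measure_orthogonal_image[OF orthogonal_transformation_inv[OF f], of "box l u"]
    by (simp add: emeasure_eq_measure2)
  also have "\<dots> = emeasure lborel (box l u)"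
    by (simp add: emeasure_eq_measure2 emeasure_completion)
  finally show "emeasure (distr lborel borel f) (box l u) = (\<Prod>b\<in>Basis. (u - l) \<bullet> b)"
    using box by simp
qed simp

lemma bij_Rep_Abs_ordered_copy: "bij Rep_ordered_copy" "bij Abs_ordered_copy"
  by (metis Abs_ordered_copy_inverse Rep_ordered_copy_inverse UNIV_I bij_betw_byWitness subsetI)+

lemma lborel_distr_orthogonal:
  fixes f :: "real^'n::finite \<Rightarrow> real^'n"
  assumes f: "orthogonal_transformation f"
  shows "distr lborel borel f = lborel"
proof -
  define P :: "real^'n \<Rightarrow> real^('n ordered_copy)" where "P v = (\<chi> j. v $ Rep_ordered_copy j)" for v
  define Q :: "real^('n ordered_copy) \<Rightarrow> real^'n" where "Q w = (\<chi> i. w $ Abs_ordered_copy i)" for w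
  note bij = bij_Rep_Abs_ordered_copy
  have PQ: "P (Q w) = w" "Q (P v) = v" for v w
    by (simp_all add: P_def Q_def vec_eq_iff Abs_ordered_copy_inverse Rep_ordered_copy_inverse)
  have lin: "linear P" "linear Q"
    by (auto simp: P_def Q_def linear_iff vec_eq_iff)
  have P_inner: "P v \<bullet> P w = v \<bullet> w" for v w
    unfolding P_def inner_vec_def
    using sum.reindex_bij_betw[OF bij(1), of "\<lambda>i. v $ i \<bullet> w $ i"] by simp
  have Q_inner: "Q v \<bullet> Q w = v \<bullet> w" for v w
    using P_inner[of "Q v" "Q w"] by (simp add: PQ)
  define g where "g = P \<circ> f \<circ> Q"
  have "orthogonal_transformation g"
    using f lin P_inner Q_inner unfolding orthogonal_transformation_def g_def
    by (auto intro: linear_compose)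
  then have g: "distr lborel borel g = lborel" "g \<in> borel_measurable borel"
    by (auto intro: lborel_distr_orthogonal_wellorder borel_measurable_linear
        orthogonal_transformation_linear)
  have [measurable]: "P \<in> borel_measurable borel" "Q \<in> borel_measurable borel"
    using lin by (auto intro: borel_measurable_linear)
  have "Q \<circ> g \<circ> P = f"
    by (simp add: g_def fun_eq_iff PQ)
  then have "distr lborel borel f = distr lborel borel (Q \<circ> g \<circ> P)"
    by simp
  also have "\<dots> = distr (distr (distr lborel borel P) borel g) borel Q"
    using g(2) by (simp add: distr_distr comp_assoc)
  also have "\<dots> = lborel"
  proof -
    have "distr lborel borel P = lborel" "distr lborel borel Q = lborel"
      unfolding P_def Q_def by (rule lborel_distr_reindex[OF bij(1)], rule lborel_distr_reindex[OF bij(2)])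
    then show ?thesis
      by (simp add: g(1))
  qed
  finally show ?thesis .
qed

section \<open>Lens volumes\<close>

lemma fmeasurable_cball_lborel: "cball (a::'a::euclidean_space) r \<in> fmeasurable lborel"
  using emeasure_lborel_cball_finite[of a r] by (intro fmeasurableI) auto

lemma fmeasurable_cball_Int_cball: "cball (a::'a::euclidean_space) r \<inter> cball b s \<in> fmeasurable lborel"
  by (rule fmeasurable_Int_fmeasurable[OF fmeasurable_cball_lborel]) auto

lemma measure_lborel_cball_eq: "measure lborel (cball (a::'a::euclidean_space) r) = measure lborel (cball (0::'a) r)"
  by (cases "r < 0") (auto simp: measure_def emeasure_cball)

definition lens_volume :: "real \<Rightarrow> real^'d \<Rightarrow> real" where
  "lens_volume \<rho> y = measure lborel (cball 0 \<rho> \<inter> cball y \<rho>)"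

lemma lens_volume_nonneg: "0 \<le> lens_volume \<rho> y"
  by (simp add: lens_volume_def)

lemma lens_volume_0: "lens_volume \<rho> (0::real^'d) = measure lborel (cball (0::real^'d) \<rho>)"
  by (simp add: lens_volume_def)

lemma lens_volume_eq_if_norm_eq:
  fixes y y' :: "real^'d"
  assumes "norm y = norm y'"
  shows "lens_volume \<rho> y = lens_volume \<rho> y'"
proof -
  obtain f where f: "orthogonal_transformation f" "f y = y'"
    using orthogonal_transformation_exists[OF assms] by blast
  have [measurable]: "f \<in> borel_measurable borel"
    by (rule borel_measurable_linear[OF orthogonal_transformation_linear[OF f(1)]])
  have "f -` (cball 0 \<rho> \<inter> cball y' \<rho>) = cball 0 \<rho> \<inter> cball y \<rho>"
    using f orthogonal_transformation_isometry[of f]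
    by (auto simp: dist_commute) (metis dist_0_norm)+
  then have "measure (distr lborel borel f) (cball 0 \<rho> \<inter> cball y' \<rho>) = lens_volume \<rho> y"
    by (simp add: measure_distr lens_volume_def)
  then show ?thesis
    by (simp add: lborel_distr_orthogonal[OF f(1)] lens_volume_def)
qed

lemma lens_volume_antimono:
  fixes y y' :: "real^'d"
  assumes "norm y \<le> norm y'"
  shows "lens_volume \<rho> y' \<le> lens_volume \<rho> y"
proof (cases "y' = 0")
  case True
  then show ?thesis using assms by simp
next
  case False
  define c where "c = norm y / norm y'"
  have c: "0 \<le> c" "c \<le> 1"
    using assms False by (auto simp: c_def)
  have "cball 0 \<rho> \<inter> cball y' \<rho> \<subseteq> cball 0 \<rho> \<inter> cball (c *\<^sub>R y') \<rho>"
  proof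
    fix u assume u: "u \<in> cball 0 \<rho> \<inter> cball y' \<rho>"
    have "u - c *\<^sub>R y' = c *\<^sub>R (u - y') + (1 - c) *\<^sub>R u"
      by (simp add: algebra_simps)
    then have "norm (u - c *\<^sub>R y') \<le> c * norm (u - y') + (1 - c) * norm u"
      using c by (metis abs_of_nonneg diff_ge_0_iff_ge norm_scaleR norm_triangle_ineq)
    also have "\<dots> \<le> c * \<rho> + (1 - c) * \<rho>"
      using u c by (intro add_mono mult_left_mono) (auto simp: dist_norm norm_minus_commute)
    finally show "u \<in> cball 0 \<rho> \<inter> cball (c *\<^sub>R y') \<rho>"
      using u by (auto simp: dist_norm norm_minus_commute algebra_simps)
  qed
  then have "lens_volume \<rho> y' \<le> lens_volume \<rho> (c *\<^sub>R y')"
    unfolding lens_volume_def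
    by (rule measure_mono_fmeasurable) (auto intro: fmeasurable_cball_Int_cball)
  also have "\<dots> = lens_volume \<rho> y"
    using False by (intro lens_volume_eq_if_norm_eq) (simp add: c_def)
  finally show ?thesis .
qed

lemma lens_volume_eq_0:
  fixes y :: "real^'d"
  assumes "2 * \<rho> \<le> norm y"
  shows "lens_volume \<rho> y = 0"
proof -
  have "u = y /\<^sub>R 2" if "u \<in> cball 0 \<rho>" "u \<in> cball y \<rho>" for u
  proof -
    have "0 \<le> \<rho>"
      using that(1) norm_ge_zero[of u] by (simp add: dist_norm del: norm_ge_zero)
    have "norm u \<le> \<rho>" "norm (u - y) \<le> \<rho>"
      using that by (simp_all add: dist_norm norm_minus_commute)
    then have "(norm u)\<^sup>2 \<le> \<rho>\<^sup>2" "(norm (u - y))\<^sup>2 \<le> \<rho>\<^sup>2"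
      by (auto intro!: power_mono)
    moreover have "4 * \<rho>\<^sup>2 \<le> (norm y)\<^sup>2"
      using power_mono[OF assms, of 2] \<open>0 \<le> \<rho>\<close> by (simp add: power_mult_distrib)
    moreover have "2 * (norm (u - y /\<^sub>R 2))\<^sup>2 = (norm u)\<^sup>2 + (norm (u - y))\<^sup>2 - (norm y)\<^sup>2 / 2"
      by (simp add: power2_norm_eq_inner inner_diff_left inner_diff_right inner_commute field_simps)
    ultimately have "(norm (u - y /\<^sub>R 2))\<^sup>2 \<le> 0"
      by argo
    then show ?thesis
      by simp
  qed
  then have "cball 0 \<rho> \<inter> cball y \<rho> \<subseteq> {y /\<^sub>R 2}"
    by blast
  then have "countable (cball 0 \<rho> \<inter> cball y \<rho>)"
    by (rule countable_subset) simp
  then show ?thesis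
    by (simp add: lens_volume_def measure_def emeasure_lborel_countable)
qed

lemma lens_volume_translate:
  "measure lborel (cball (a::real^'d) \<rho> \<inter> cball b \<rho>) = lens_volume \<rho> (b - a)"
proof -
  have "(\<lambda>x. x - a) ` (cball a \<rho> \<inter> cball b \<rho>) = cball 0 \<rho> \<inter> cball (b - a) \<rho>"
    by (force simp: dist_norm algebra_simps)
  then show ?thesis
    using measure_translation_subtract[of a "cball a \<rho> \<inter> cball b \<rho>"]
    by (simp add: lens_volume_def measure_completion)
qed

lemma nn_integral_lens_volume:
  "(\<integral>\<^sup>+ y. lens_volume \<rho> (y::real^'d) \<partial>lborel) = ennreal ((measure lborel (cball (0::real^'d) \<rho>))\<^sup>2)"
proof -
  define A where "A = {p::(real^'d) \<times> (real^'d). norm (snd p) \<le> \<rho> \<and> dist (fst p) (snd p) \<le> \<rho>}"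
  have A: "A \<in> sets (lborel \<Otimes>\<^sub>M lborel)"
  proof -
    have "closed A" unfolding A_def
      by (intro closed_Collect_conj closed_Collect_le continuous_intros)
    then show ?thesis unfolding lborel_prod by auto
  qed
  have "Pair y -` A = cball 0 \<rho> \<inter> cball y \<rho>" for y
    by (auto simp: A_def)
  then have row: "ennreal (lens_volume \<rho> y) = emeasure lborel (Pair y -` A)" for y
    using fmeasurable_cball_Int_cball[of 0 \<rho> y \<rho>] by (simp add: lens_volume_def emeasure_eq_measure2)
  have column: "emeasure lborel ((\<lambda>x. (x, u)) -` A) = indicator (cball 0 \<rho>) u * emeasure lborel (cball (0::real^'d) \<rho>)" for u
  proof (cases "norm u \<le> \<rho>")
    case True
    then have "(\<lambda>x. (x, u)) -` A = cball u \<rho>"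
      by (auto simp: A_def dist_commute)
    then show ?thesis
      using True by (cases "\<rho> < 0") (auto simp: emeasure_cball)
  next
    case False
    then have "(\<lambda>x. (x, u)) -` A = {}"
      by (auto simp: A_def)
    then show ?thesis
      using False by simp
  qed
  have "(\<integral>\<^sup>+ y. lens_volume \<rho> (y::real^'d) \<partial>lborel) = emeasure (lborel \<Otimes>\<^sub>M lborel) A"
    using lborel.emeasure_pair_measure_alt[OF A] by (simp add: row)
  also have "\<dots> = (\<integral>\<^sup>+ u. indicator (cball 0 \<rho>) (u::real^'d) * emeasure lborel (cball (0::real^'d) \<rho>) \<partial>lborel)"
    unfolding lborel_pair.emeasure_pair_measure_alt2[OF A] column ..
  also have "\<dots> = emeasure lborel (cball (0::real^'d) \<rho>) * emeasure lborel (cball (0::real^'d) \<rho>)"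
    by (subst nn_integral_multc) (auto simp: mult.commute intro!: borel_measurable_indicator)
  finally show ?thesis
    using fmeasurable_cball_lborel[of "0::real^'d" \<rho>]
    by (simp add: emeasure_eq_measure2 power2_eq_square ennreal_mult)
qed

section \<open>The integer lattice and the unit cube\<close>

lemma zero_in_int_lattice [simp]: "0 \<in> int_lattice"
  by (simp add: int_lattice_def)

lemma int_lattice_diff: "a \<in> int_lattice \<Longrightarrow> b \<in> int_lattice \<Longrightarrow> a - b \<in> int_lattice"
  by (auto simp: int_lattice_def)

lemma int_lattice_uminus: "a \<in> int_lattice \<Longrightarrow> - a \<in> int_lattice"
  by (auto simp: int_lattice_def)

lemma int_lattice_component:
  assumes "n \<in> int_lattice"
  obtains k where "n $ i = of_int k"
  using assms by (auto simp: int_lattice_def elim: Ints_cases)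

lemma norm_int_lattice_ge_1:
  assumes "n \<in> int_lattice" "n \<noteq> 0"
  shows "1 \<le> norm n"
proof -
  obtain i where i: "n $ i \<noteq> 0"
    using assms(2) by (metis vec_eq_iff zero_index)
  obtain k where k: "n $ i = of_int k"
    using assms(1) int_lattice_component by blast
  then have "1 \<le> \<bar>n $ i\<bar>"
    using i by auto
  also have "\<dots> \<le> norm n"
    by (rule component_le_norm_cart)
  finally show ?thesis .
qed

lemma int_lattice_eqI:
  assumes "n \<in> int_lattice" "m \<in> int_lattice" "norm (n - m) < 1"
  shows "n = m"
  using norm_int_lattice_ge_1[OF int_lattice_diff[OF assms(1,2)]] assms(3) by force

definition lattice_window :: "real \<Rightarrow> (real^'d) set" where
  "lattice_window R = {n. n \<in> int_lattice \<and> (\<forall>i. \<bar>n $ i\<bar> \<le> R)}"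

lemma lattice_window: "finite (lattice_window R :: (real^'d) set)" "lattice_window R \<subseteq> int_lattice"
proof -
  define K where "K = \<lceil>R\<rceil>"
  have "lattice_window R \<subseteq> ((\<lambda>f. \<chi> i. of_int (f i)) ` (UNIV \<rightarrow>\<^sub>E {-K..K}) :: (real^'d) set)"
  proof
    fix n :: "real^'d"
    assume n: "n \<in> lattice_window R"
    then have "n $ i = of_int \<lfloor>n $ i\<rfloor>" for i
      by (auto simp: lattice_window_def int_lattice_def elim!: Ints_cases)
    moreover have "\<lfloor>n $ i\<rfloor> \<in> {-K..K}" for i
    proof -
      have "\<bar>real_of_int \<lfloor>n $ i\<rfloor>\<bar> \<le> R"
        using n \<open>n $ i = of_int \<lfloor>n $ i\<rfloor>\<close> by (metis (mono_tags, lifting) lattice_window_def mem_Collect_eq)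
      then show ?thesis
        unfolding K_def by (simp add: abs_le_iff) linarith
    qed
    ultimately show "n \<in> (\<lambda>f. \<chi> i. of_int (f i)) ` (UNIV \<rightarrow>\<^sub>E {-K..K})"
      by (intro image_eqI[of _ _ "\<lambda>i. \<lfloor>n $ i\<rfloor>"]) (auto simp: vec_eq_iff)
  qed
  then show "finite (lattice_window R :: (real^'d) set)"
    by (rule finite_subset) (intro finite_imageI finite_PiE, auto)
qed (auto simp: lattice_window_def)

lemma inner_int_lattice_Ints:
  "l \<in> int_lattice \<Longrightarrow> n \<in> int_lattice \<Longrightarrow> l \<bullet> n \<in> \<int>"
  unfolding inner_vec_def int_lattice_def by (intro Ints_sum) (auto intro: Ints_mult)

lemma torus_dist_le:
  assumes "q \<in> int_lattice"
  shows "torus_dist a b \<le> norm (a - b - q)"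
  unfolding torus_dist_def using assms by (intro cInf_lower bdd_belowI[of _ 0]) auto

lemma torus_dist_nonneg: "0 \<le> torus_dist a b"
  unfolding torus_dist_def by (rule cInf_greatest) (use zero_in_int_lattice in blast, auto)

definition lattice_residue :: "real^'d \<Rightarrow> real^'d" where
  "lattice_residue v = (\<chi> i. v $ i - of_int (round (v $ i)))"

lemma lattice_residue_diff: "v - lattice_residue v \<in> int_lattice"
  by (simp add: lattice_residue_def int_lattice_def)

lemma norm_lattice_residue_le:
  assumes "q \<in> int_lattice"
  shows "norm (lattice_residue v) \<le> norm (v - q)"
proof (rule norm_le_componentwise_cart)
  fix i
  obtain k where "q $ i = of_int k"
    using assms int_lattice_component by blast
  then show "norm (lattice_residue v $ i) \<le> norm ((v - q) $ i)"
    using round_diff_minimal[of "v $ i" k] by (simp add: lattice_residue_def)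
qed

lemma abs_lattice_residue_component: "\<bar>lattice_residue v $ i\<bar> \<le> 1/2"
  unfolding lattice_residue_def using of_int_round_abs_le[of "v $ i"] by (simp add: abs_minus_commute)

lemma lattice_residue_add:
  assumes "q \<in> int_lattice"
  shows "lattice_residue (v + q) = lattice_residue v"
proof -
  have "(v + q) $ i - of_int (round ((v + q) $ i)) = v $ i - of_int (round (v $ i))" for i
  proof -
    obtain k where k: "q $ i = of_int k"
      using assms int_lattice_component by blast
    have "v $ i + of_int k + 1/2 = (v $ i + 1/2) + of_int k"
      by simp
    then have "round (v $ i + of_int k) = round (v $ i) + k"
      unfolding round_def by (metis floor_add_int)
    then show ?thesis
      using k by simp
  qed
  then show ?thesis
    by (simp add: lattice_residue_def vec_eq_iff)
qed

lemma borel_measurable_lattice_residue [measurable]: "lattice_residue \<in> borel_measurable borel"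
proof -
  have "(\<lambda>x::real. real_of_int (round x)) = (\<lambda>x. real_of_int \<lfloor>x\<rfloor>) \<circ> (\<lambda>x. x + 1/2)"
    by (auto simp: round_def)
  moreover have "(\<lambda>x::real. x + 1/2) \<in> borel_measurable borel"
    by simp
  ultimately have [measurable]: "(\<lambda>x::real. real_of_int (round x)) \<in> borel_measurable borel"
    using measurable_comp borel_measurable_real_floor by metis
  have "(\<lambda>v::real^'d. lattice_residue v $ i) \<in> borel_measurable borel" for i
    unfolding lattice_residue_def by simp
  then show ?thesis
    by (subst borel_measurable_euclidean_space) (auto simp: Basis_vec_def cart_eq_inner_axis[symmetric])
qed

definition unit_cube :: "(real^'d) set" where
  "unit_cube = {u. \<forall>i. 0 \<le> u $ i \<and> u $ i < 1}"

definition lattice_floor :: "real^'d \<Rightarrow> real^'d" where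
  "lattice_floor v = (\<chi> i. of_int \<lfloor>v $ i\<rfloor>)"

lemma lattice_floor_in_int_lattice: "lattice_floor v \<in> int_lattice"
  by (simp add: lattice_floor_def int_lattice_def)

lemma diff_lattice_floor_in_unit_cube: "v - lattice_floor v \<in> unit_cube"
  by (simp add: lattice_floor_def unit_cube_def) linarith

lemma abs_lattice_floor_component: "\<bar>lattice_floor v $ i\<bar> \<le> \<bar>v $ i\<bar> + 1"
  using of_int_floor_le[of "v $ i"] real_of_int_floor_add_one_gt[of "v $ i"]
  by (simp add: lattice_floor_def) linarith

lemma unit_cube_translate_unique:
  assumes "a \<in> unit_cube" "a + q \<in> unit_cube" "q \<in> int_lattice"
  shows "q = 0"
proof -
  have "q $ i = 0" for i
  proof -
    obtain k where k: "q $ i = of_int k"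
      using assms(3) int_lattice_component by blast
    have "0 \<le> a $ i" "a $ i < 1" "0 \<le> (a + q) $ i" "(a + q) $ i < 1"
      using assms(1,2) unfolding unit_cube_def by blast+
    then have "real_of_int k < 1" "-1 < real_of_int k"
      using k by auto
    then have "k = 0"
      by linarith
    then show ?thesis
      using k by simp
  qed
  then show ?thesis
    by (simp add: vec_eq_iff)
qed

lemma unit_cube_sets [measurable]: "unit_cube \<in> sets (borel :: (real^'d) measure)"
proof -
  have eq: "unit_cube = (\<Inter>i\<in>UNIV. {u::real^'d. 0 \<le> u $ i} \<inter> {u. u $ i < 1})"
    by (auto simp: unit_cube_def)
  have "{u::real^'d. 0 \<le> u $ i} \<in> sets borel" "{u::real^'d. u $ i < 1} \<in> sets borel" for i
    by (intro borel_closed borel_open closed_Collect_le open_Collect_less continuous_intros)+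
  then show ?thesis
    unfolding eq by (intro sets.finite_INT) auto
qed

lemma emeasure_unit_cube: "emeasure lborel (unit_cube :: (real^'d) set) = 1"
proof (rule antisym)
  have "box 0 1 \<subseteq> (unit_cube :: (real^'d) set)" "unit_cube \<subseteq> cbox (0::real^'d) 1"
    by (auto simp: unit_cube_def mem_box_cart less_imp_le)
  moreover have "emeasure lborel (box (0::real^'d) 1) = 1" "emeasure lborel (cbox (0::real^'d) 1) = 1"
    using prod_Basis_vec[of "1::real^'d"]
    by (simp_all add: emeasure_lborel_box_eq emeasure_lborel_cbox_eq Basis_vec_def inner_axis)
  ultimately show "emeasure lborel (unit_cube :: (real^'d) set) \<le> 1"
    and "1 \<le> emeasure lborel (unit_cube :: (real^'d) set)"
    using emeasure_mono[of "box (0::real^'d) 1" unit_cube lborel]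
      emeasure_mono[of unit_cube "cbox (0::real^'d) 1" lborel]
    by auto
qed

section \<open>Integration over the torus\<close>

definition cis2pi :: "real \<Rightarrow> complex" where
  "cis2pi x = cis (2 * pi * x)"

lemma cis2pi_add: "cis2pi (a + b) = cis2pi a * cis2pi b"
  by (simp add: cis2pi_def distrib_left cis_mult[symmetric] add.commute)

lemma cis2pi_Ints: "x \<in> \<int> \<Longrightarrow> cis2pi x = 1"
  by (simp add: cis2pi_def cis_multiple_2pi)

lemma cis2pi_half: "cis2pi (1/2) = -1"
  by (simp add: cis2pi_def cis.ctr complex_eq_iff)

lemma cis2pi_0 [simp]: "cis2pi 0 = 1"
  by (simp add: cis2pi_def)

lemma norm_cis2pi [simp]: "norm (cis2pi x) = 1"
  by (simp add: cis2pi_def)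

lemma cnj_cis2pi: "cnj (cis2pi x) = cis2pi (- x)"
  by (simp add: cis2pi_def cis_cnj)

lemma cis2pi_conv_exp: "exp (complex_of_real (2 * pi * x) * \<i>) = cis2pi x"
  by (simp add: cis2pi_def cis_conv_exp mult.commute)

lemma borel_measurable_cis2pi [measurable]: "cis2pi \<in> borel_measurable borel"
  unfolding cis2pi_def by (intro borel_measurable_continuous_onI continuous_intros)

lemma cis2pi_inner_add_int_lattice:
  assumes "l \<in> int_lattice" "n \<in> int_lattice"
  shows "cis2pi (l \<bullet> (u + n)) = cis2pi (l \<bullet> u)"
  using cis2pi_Ints[OF inner_int_lattice_Ints[OF assms]] by (simp add: inner_add_right cis2pi_add)

definition bounded_borel :: "(real^'d \<Rightarrow> complex) \<Rightarrow> bool" where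
  "bounded_borel F \<longleftrightarrow> F \<in> borel_measurable borel \<and> (\<exists>B. \<forall>u. norm (F u) \<le> B)"

definition cube_integral :: "(real^'d \<Rightarrow> complex) \<Rightarrow> complex" where
  "cube_integral F = (\<integral>u. of_real (indicator unit_cube u) * F u \<partial>lborel)"

lemma bounded_borelD:
  assumes "bounded_borel F"
  obtains B where "F \<in> borel_measurable borel" "\<And>u. norm (F u) \<le> B"
  using assms unfolding bounded_borel_def by blast

lemma integrable_unit_cube_mult:
  assumes "bounded_borel F"
  shows "integrable lborel (\<lambda>u. of_real (indicator unit_cube u) * F u)"
proof -
  obtain B where "F \<in> borel_measurable borel" "\<And>u. norm (F u) \<le> B"
    using bounded_borelD[OF assms] by metis
  then show ?thesis
    by (intro integrableI_bounded_set[where A=unit_cube and B=B])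
       (auto simp: emeasure_unit_cube norm_mult)
qed

lemma bounded_borel_add: "bounded_borel F \<Longrightarrow> bounded_borel G \<Longrightarrow> bounded_borel (\<lambda>u. F u + G u)"
  unfolding bounded_borel_def
  by (auto intro!: exI[of _ "_ + _"] order_trans[OF norm_triangle_ineq] add_mono)

lemma bounded_borel_diff: "bounded_borel F \<Longrightarrow> bounded_borel G \<Longrightarrow> bounded_borel (\<lambda>u. F u - G u)"
  unfolding bounded_borel_def
  by (auto intro!: exI[of _ "_ + _"] order_trans[OF norm_triangle_ineq4] add_mono)

lemma bounded_borel_mult: "bounded_borel F \<Longrightarrow> bounded_borel G \<Longrightarrow> bounded_borel (\<lambda>u. F u * G u)"
proof -
  assume "bounded_borel F" "bounded_borel G"
  then obtain B C where "F \<in> borel_measurable borel" "G \<in> borel_measurable borel"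
    and B: "\<And>u. norm (F u) \<le> B" and C: "\<And>u. norm (G u) \<le> C"
    by (metis bounded_borelD)
  moreover have "norm (F u * G u) \<le> B * C" for u
    unfolding norm_mult using B C by (intro mult_mono) (auto intro: order_trans[OF norm_ge_zero])
  ultimately show "bounded_borel (\<lambda>u. F u * G u)"
    by (auto simp: bounded_borel_def)
qed

lemma bounded_borel_const: "bounded_borel (\<lambda>u. c)"
  by (auto simp: bounded_borel_def)

lemma borel_measurable_cnj [measurable]: "cnj \<in> borel_measurable borel"
  by (intro borel_measurable_continuous_onI continuous_intros)

lemma bounded_borel_cnj: "bounded_borel F \<Longrightarrow> bounded_borel (\<lambda>u. cnj (F u))"
  by (auto simp: bounded_borel_def)

lemma bounded_borel_cis2pi:
  "bounded_borel (\<lambda>u. cis2pi (l \<bullet> u))" "bounded_borel (\<lambda>u. cis2pi (- (l \<bullet> u)))"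
  by (auto simp: bounded_borel_def)

lemma bounded_borel_sum:
  "(\<And>i. i \<in> I \<Longrightarrow> bounded_borel (F i)) \<Longrightarrow> bounded_borel (\<lambda>u. \<Sum>i\<in>I. F i u)"
  by (induction I rule: infinite_finite_induct) (auto intro: bounded_borel_add bounded_borel_const)

lemma bounded_borel_of_real:
  "f \<in> borel_measurable borel \<Longrightarrow> (\<And>u. \<bar>f u\<bar> \<le> B) \<Longrightarrow> bounded_borel (\<lambda>u. of_real (f u))"
  by (auto simp: bounded_borel_def)

lemmas bounded_borel_intros =
  bounded_borel_add bounded_borel_diff bounded_borel_mult bounded_borel_const bounded_borel_cnj
  bounded_borel_cis2pi bounded_borel_sum bounded_borel_of_real

lemma cube_integral_diff:
  "bounded_borel F \<Longrightarrow> bounded_borel G \<Longrightarrow> cube_integral (\<lambda>u. F u - G u) = cube_integral F - cube_integral G"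
  unfolding cube_integral_def by (simp add: right_diff_distrib integrable_unit_cube_mult)

lemma cube_integral_sum:
  "(\<And>i. i \<in> I \<Longrightarrow> bounded_borel (F i)) \<Longrightarrow> cube_integral (\<lambda>u. \<Sum>i\<in>I. F i u) = (\<Sum>i\<in>I. cube_integral (F i))"
  unfolding cube_integral_def sum_distrib_left
  by (rule Bochner_Integration.integral_sum) (auto intro: integrable_unit_cube_mult)

lemma cube_integral_cmult: "cube_integral (\<lambda>u. c * F u) = c * cube_integral F"
  unfolding cube_integral_def by (simp add: mult.left_commute[of _ c] integral_mult_right_zero)

lemma cube_integral_cnj: "cube_integral (\<lambda>u. cnj (F u)) = cnj (cube_integral F)"
  unfolding cube_integral_def by (simp add: Bochner_Integration.integral_cnj[symmetric])

lemma cube_integral_of_real: "cube_integral (\<lambda>u. of_real (f u)) = of_real (\<integral>u. indicator unit_cube u * f u \<partial>lborel)"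
  unfolding cube_integral_def by (simp add: integral_complex_of_real[symmetric])

lemma Re_cube_integral_nonneg:
  "(\<And>u. 0 \<le> f u) \<Longrightarrow> 0 \<le> Re (cube_integral (\<lambda>u. of_real (f u)))"
  unfolding cube_integral_of_real by (simp add: Bochner_Integration.integral_nonneg)

lemma integral_lborel_add:
  fixes f :: "'a::euclidean_space \<Rightarrow> 'b::{banach,second_countable_topology}"
  assumes "f \<in> borel_measurable borel"
  shows "(\<integral>v. f v \<partial>lborel) = (\<integral>u. f (u + n) \<partial>lborel)"
  using assms integral_distr[of "(+) n" lborel borel f] by (simp add: lborel_distr_plus add.commute)

lemma lattice_floor_in_lattice_window:
  assumes "norm v \<le> R"
  shows "lattice_floor v \<in> lattice_window (R + 1)"
proof -
  have "\<bar>lattice_floor v $ i\<bar> \<le> R + 1" for i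
    using abs_lattice_floor_component[of v i] component_le_norm_cart[of v i] assms by linarith
  then show ?thesis
    by (simp add: lattice_window_def lattice_floor_in_int_lattice)
qed

lemma add_in_unit_cube_iff:
  assumes "n \<in> int_lattice"
  shows "w + n \<in> unit_cube \<longleftrightarrow> n = - lattice_floor w"
proof
  assume "w + n \<in> unit_cube"
  then have "(w - lattice_floor w) + (n + lattice_floor w) \<in> unit_cube"
    by simp
  moreover have "n + lattice_floor w \<in> int_lattice"
    using assms lattice_floor_in_int_lattice[of w] by (auto simp: int_lattice_def)
  ultimately have "n + lattice_floor w = 0"
    using unit_cube_translate_unique diff_lattice_floor_in_unit_cube by blast
  then show "n = - lattice_floor w"
    by (simp add: eq_neg_iff_add_eq_0)
qed (use diff_lattice_floor_in_unit_cube in simp)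

lemma sum_indicator_unit_cube_diff:
  assumes "finite D" "D \<subseteq> int_lattice"
  shows "(\<Sum>n\<in>D. indicator unit_cube (w - n) :: real) = indicator D (lattice_floor w)"
proof -
  have "indicator unit_cube (w - n) = (if n = lattice_floor w then 1 else 0 :: real)" if "n \<in> D" for n
    using add_in_unit_cube_iff[of "- n" w] that assms(2) int_lattice_uminus by (auto simp: indicator_def)
  then have "(\<Sum>n\<in>D. indicator unit_cube (w - n) :: real) = (\<Sum>n\<in>D. if n = lattice_floor w then 1 else 0)"
    by (rule sum.cong[OF refl])
  then show ?thesis
    using assms(1) by (simp add: sum.delta indicator_def)
qed

lemma sum_indicator_unit_cube_add:
  assumes "finite D" "D \<subseteq> int_lattice"
  shows "(\<Sum>n\<in>D. indicator unit_cube (w + n) :: real) = indicator D (- lattice_floor w)"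
proof -
  have "indicator unit_cube (w + n) = (if n = - lattice_floor w then 1 else 0 :: real)" if "n \<in> D" for n
    using add_in_unit_cube_iff[of n w] that assms(2) by (auto simp: indicator_def)
  then have "(\<Sum>n\<in>D. indicator unit_cube (w + n) :: real) = (\<Sum>n\<in>D. if n = - lattice_floor w then 1 else 0)"
    by (rule sum.cong[OF refl])
  then show ?thesis
    using assms(1) by (simp add: sum.delta indicator_def)
qed

lemma integral_lborel_eq_cube_integral:
  fixes g :: "real^'d \<Rightarrow> real" and P :: "real^'d \<Rightarrow> complex"
  assumes g: "g \<in> borel_measurable borel" "\<And>v. \<bar>g v\<bar> \<le> B"
    and g_support: "\<And>v. g v \<noteq> 0 \<Longrightarrow> norm v \<le> R \<and> lattice_floor v \<in> D"
    and P: "bounded_borel P" "\<And>u n. n \<in> int_lattice \<Longrightarrow> P (u + n) = P u"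
    and D: "finite D" "D \<subseteq> int_lattice"
  shows "(\<integral>v. of_real (g v) * P v \<partial>lborel) = cube_integral (\<lambda>u. of_real (\<Sum>n\<in>D. g (u + n)) * P u)"
proof -
  obtain BP where P_meas: "P \<in> borel_measurable borel" and BP: "\<And>u. norm (P u) \<le> BP"
    using bounded_borelD[OF P(1)] by metis
  define piece where "piece n v = of_real (indicator unit_cube (v - n) * g v) * P v" for n v
  have partition: "of_real (g v) * P v = (\<Sum>n\<in>D. piece n v)" for v
    using g_support[of v] sum_indicator_unit_cube_diff[OF D, of v]
    by (cases "g v = 0") (auto simp: piece_def sum_distrib_right[symmetric] simp flip: of_real_sum)
  have "integrable lborel (piece n)" for n
  proof (rule integrableI_bounded_set[where A="cball 0 R" and B="B * BP"])
    show "piece n \<in> borel_measurable lborel"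
      unfolding piece_def using g(1) P_meas by simp
    show "emeasure lborel (cball (0::real^'d) R) < \<infinity>"
      by (rule emeasure_lborel_cball_finite)
    have "norm (piece n v) \<le> B * BP" for v
      unfolding piece_def norm_mult using g(2)[of v] BP[of v]
      by (intro mult_mono) (auto simp: indicator_def intro: order_trans[OF norm_ge_zero])
    then show "AE v in lborel. v \<in> cball 0 R \<longrightarrow> norm (piece n v) \<le> B * BP"
      by auto
  qed (use g_support in \<open>auto simp: piece_def\<close>)
  then have "(\<integral>v. of_real (g v) * P v \<partial>lborel) = (\<Sum>n\<in>D. \<integral>v. piece n v \<partial>lborel)"
    by (simp add: partition)
  also have "\<dots> = (\<Sum>n\<in>D. cube_integral (\<lambda>u. of_real (g (u + n)) * P u))"
  proof (rule sum.cong[OF refl])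
    fix n assume "n \<in> D"
    then have shifted: "piece n (u + n) = of_real (indicator unit_cube u) * (of_real (g (u + n)) * P u)" for u
      using P(2)[of n] D by (auto simp: piece_def)
    have "(\<integral>v. piece n v \<partial>lborel) = (\<integral>u. piece n (u + n) \<partial>lborel)"
      unfolding piece_def using g(1) P_meas by (intro integral_lborel_add) simp
    then show "(\<integral>v. piece n v \<partial>lborel) = cube_integral (\<lambda>u. of_real (g (u + n)) * P u)"
      by (simp only: shifted cube_integral_def)
  qed
  also have "\<dots> = cube_integral (\<lambda>u. of_real (\<Sum>n\<in>D. g (u + n)) * P u)"
  proof -
    have "bounded_borel (\<lambda>u. of_real (g (u + n)) * P u)" for n
      using g P(1) by (intro bounded_borel_mult bounded_borel_of_real[where B=B]) auto
    then show ?thesis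
      by (subst cube_integral_sum[symmetric]) (auto simp: sum_distrib_right)
  qed
  finally show ?thesis .
qed

lemma norm_le_card_if_in_unit_cube:
  fixes u :: "real^'d"
  assumes "u \<in> unit_cube"
  shows "norm u \<le> real CARD('d)"
proof -
  have "norm u \<le> (\<Sum>i\<in>UNIV. \<bar>u $ i\<bar>)"
    by (rule norm_le_l1_cart)
  also have "\<dots> \<le> (\<Sum>i\<in>(UNIV::'d set). 1)"
    using assms by (intro sum_mono) (auto simp: unit_cube_def abs_le_iff less_imp_le)
  finally show ?thesis
    by simp
qed

lemma cube_integral_shift:
  fixes P :: "real^'d \<Rightarrow> complex"
  assumes P: "bounded_borel P" "\<And>u n. n \<in> int_lattice \<Longrightarrow> P (u + n) = P u"
  shows "cube_integral (\<lambda>u. P (u + a)) = cube_integral P"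
proof -
  define R where "R = norm a + real CARD('d)"
  define D :: "(real^'d) set" where "D = lattice_window (R + 1)"
  define g where "g v = (indicator unit_cube (v - a) :: real)" for v
  have g_support: "norm v \<le> R \<and> lattice_floor v \<in> D" if "g v \<noteq> 0" for v
  proof -
    have "v - a \<in> unit_cube"
      using that by (simp add: g_def indicator_def split: if_splits)
    then have "norm v \<le> R"
      using norm_triangle_ineq[of a "v - a"] norm_le_card_if_in_unit_cube[of "v - a"]
      by (simp add: R_def)
    then show ?thesis
      using lattice_floor_in_lattice_window by (auto simp: D_def)
  qed
  have periodize: "(\<Sum>n\<in>D. g (u + n)) = 1" if "u \<in> unit_cube" for u
  proof -
    have "norm (u - a) \<le> R"
      using norm_triangle_ineq4[of u a] norm_le_card_if_in_unit_cube[OF that] by (simp add: R_def)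
    then have "- lattice_floor (u - a) \<in> D"
      using lattice_floor_in_lattice_window by (auto simp: D_def lattice_window_def int_lattice_uminus)
    then show ?thesis
      using sum_indicator_unit_cube_add[OF lattice_window, of "u - a" "R + 1"]
      by (simp add: D_def g_def algebra_simps)
  qed
  have [measurable]: "P \<in> borel_measurable borel"
    using P(1) by (simp add: bounded_borel_def)
  have "cube_integral (\<lambda>u. P (u + a)) = (\<integral>v. of_real (g v) * P v \<partial>lborel)"
    using integral_lborel_add[of "\<lambda>v. of_real (g v) * P v" a] by (simp add: cube_integral_def g_def)
  also have "\<dots> = cube_integral (\<lambda>u. of_real (\<Sum>n\<in>D. g (u + n)) * P u)"
    using g_support P lattice_window[of "R + 1"]
    by (intro integral_lborel_eq_cube_integral[where B=1]) (auto simp: g_def D_def)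
  also have "\<dots> = cube_integral P"
  proof -
    have "of_real (indicator unit_cube u) * (of_real (\<Sum>n\<in>D. g (u + n)) * P u) = of_real (indicator unit_cube u) * P u" for u
      by (cases "u \<in> unit_cube") (simp_all add: periodize del: of_real_sum)
    then show ?thesis
      by (simp only: cube_integral_def)
  qed
  finally show ?thesis .
qed

lemma cube_integral_cis2pi:
  assumes "m \<in> int_lattice"
  shows "cube_integral (\<lambda>u::real^'d. cis2pi (m \<bullet> u)) = (if m = 0 then 1 else 0)"
proof (cases "m = 0")
  case True
  then show ?thesis
    using emeasure_unit_cube by (simp add: cube_integral_def integral_complex_of_real measure_def)
next
  case False
  then obtain j where j: "m $ j \<noteq> 0"
    by (metis vec_eq_iff zero_index)
  define a where "a = axis j (1 / (2 * m $ j))"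
  have "cis2pi (m \<bullet> a) = -1"
    using j cis2pi_half by (simp add: a_def inner_axis)
  then have "cube_integral (\<lambda>u. cis2pi (m \<bullet> (u + a))) = - cube_integral (\<lambda>u. cis2pi (m \<bullet> u))"
    using cube_integral_cmult[of "-1" "\<lambda>u. cis2pi (m \<bullet> u)"]
    by (simp add: inner_add_right cis2pi_add)
  moreover have "cube_integral (\<lambda>u. cis2pi (m \<bullet> (u + a))) = cube_integral (\<lambda>u. cis2pi (m \<bullet> u))"
    using assms by (intro cube_integral_shift bounded_borel_intros) (auto simp: cis2pi_inner_add_int_lattice)
  ultimately show ?thesis
    using False by simp
qed

definition fourier_coeff :: "(real^'d \<Rightarrow> complex) \<Rightarrow> real^'d \<Rightarrow> complex" where
  "fourier_coeff F l = cube_integral (\<lambda>u. F u * cis2pi (- (l \<bullet> u)))"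

lemma cube_integral_mult_cnj_trig_poly:
  assumes "bounded_borel F" "finite \<Lambda>" "\<And>u. Q u = (\<Sum>l\<in>\<Lambda>. c l * cis2pi (l \<bullet> u))"
  shows "cube_integral (\<lambda>u. F u * cnj (Q u)) = (\<Sum>l\<in>\<Lambda>. cnj (c l) * fourier_coeff F l)"
proof -
  have "(\<lambda>u. F u * cnj (Q u)) = (\<lambda>u. \<Sum>l\<in>\<Lambda>. cnj (c l) * (F u * cis2pi (- (l \<bullet> u))))"
    by (simp add: assms(3) sum_distrib_left cnj_cis2pi mult_ac)
  then have "cube_integral (\<lambda>u. F u * cnj (Q u))
      = (\<Sum>l\<in>\<Lambda>. cube_integral (\<lambda>u. cnj (c l) * (F u * cis2pi (- (l \<bullet> u)))))"
    using assms(1) by (simp add: cube_integral_sum bounded_borel_intros)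
  then show ?thesis
    by (simp add: cube_integral_cmult fourier_coeff_def)
qed

lemma fourier_coeff_trig_poly:
  assumes "finite \<Lambda>" "\<Lambda> \<subseteq> int_lattice" "l \<in> int_lattice"
    and "\<And>u. Q u = (\<Sum>m\<in>\<Lambda>. c m * cis2pi (m \<bullet> u))"
  shows "fourier_coeff Q l = (if l \<in> \<Lambda> then c l else 0)"
proof -
  have "(\<lambda>u. Q u * cis2pi (- (l \<bullet> u))) = (\<lambda>u. \<Sum>m\<in>\<Lambda>. c m * cis2pi ((m - l) \<bullet> u))"
    by (simp add: assms(4) sum_distrib_right inner_diff_left cis2pi_add[symmetric] mult.assoc)
  then have "fourier_coeff Q l = (\<Sum>m\<in>\<Lambda>. c m * cube_integral (\<lambda>u. cis2pi ((m - l) \<bullet> u)))"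
    by (simp add: fourier_coeff_def cube_integral_sum cube_integral_cmult bounded_borel_intros)
  also have "\<dots> = (\<Sum>m\<in>\<Lambda>. if m = l then c m else 0)"
    using assms by (intro sum.cong refl) (auto simp: cube_integral_cis2pi int_lattice_diff subset_iff)
  finally show ?thesis
    using assms(1) by simp
qed

lemma bessel_inequality:
  fixes f :: "real^'d \<Rightarrow> real"
  assumes "f \<in> borel_measurable borel" "\<And>u. \<bar>f u\<bar> \<le> B" "finite \<Lambda>" "\<Lambda> \<subseteq> int_lattice"
  shows "(\<Sum>l\<in>\<Lambda>. (norm (fourier_coeff (\<lambda>u. of_real (f u)) l))\<^sup>2) \<le> (\<integral>u. indicator unit_cube u * (f u)\<^sup>2 \<partial>lborel)"
proof -
  define F where "F u = (of_real (f u) :: complex)" for u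
  define a where "a = fourier_coeff F"
  define P where "P u = (\<Sum>l\<in>\<Lambda>. a l * cis2pi (l \<bullet> u))" for u
  define S where "S = (\<Sum>l\<in>\<Lambda>. cnj (a l) * a l)"
  have F: "bounded_borel F"
    using assms(1,2) unfolding F_def by (rule bounded_borel_of_real)
  have P: "bounded_borel P"
    unfolding P_def by (intro bounded_borel_intros)
  have FP: "cube_integral (\<lambda>u. F u * cnj (P u)) = S"
    unfolding S_def a_def using F assms(3) P_def[unfolded a_def] by (rule cube_integral_mult_cnj_trig_poly)
  have PF: "cube_integral (\<lambda>u. P u * cnj (F u)) = S"
    using arg_cong[OF FP, of cnj] by (simp add: cube_integral_cnj[symmetric] S_def mult.commute)
  have "fourier_coeff P l = a l" if "l \<in> \<Lambda>" for l
    using that assms(3,4) P_def by (subst fourier_coeff_trig_poly) auto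
  then have PP: "cube_integral (\<lambda>u. P u * cnj (P u)) = S"
    unfolding S_def using cube_integral_mult_cnj_trig_poly[OF P assms(3) P_def] by simp
  have FF: "cube_integral (\<lambda>u. F u * cnj (F u)) = of_real (\<integral>u. indicator unit_cube u * (f u)\<^sup>2 \<partial>lborel)"
    by (simp add: F_def power2_eq_square cube_integral_of_real[symmetric])
  have "(\<lambda>u. (F u - P u) * cnj (F u - P u))
      = (\<lambda>u. F u * cnj (F u) - F u * cnj (P u) - (P u * cnj (F u) - P u * cnj (P u)))"
    by (simp add: algebra_simps)
  then have "cube_integral (\<lambda>u. of_real ((norm (F u - P u))\<^sup>2))
      = of_real (\<integral>u. indicator unit_cube u * (f u)\<^sup>2 \<partial>lborel) - S"
    using F P by (simp add: complex_norm_square FF FP PF PP cube_integral_diff bounded_borel_intros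
        del: of_real_power)
  moreover have "S = of_real (\<Sum>l\<in>\<Lambda>. (norm (a l))\<^sup>2)"
    by (simp add: S_def complex_norm_square mult.commute del: of_real_power)
  ultimately show ?thesis
    using Re_cube_integral_nonneg[of "\<lambda>u. (norm (F u - P u))\<^sup>2"] by (simp add: a_def F_def[abs_def])
qed

section \<open>Periodized balls\<close>

definition periodic_ball :: "real \<Rightarrow> real^'d \<Rightarrow> real^'d \<Rightarrow> real" where
  "periodic_ball \<rho> a u = (if norm (lattice_residue (u - a)) \<le> \<rho> then 1 else 0)"

lemma borel_measurable_periodic_ball [measurable]: "periodic_ball \<rho> a \<in> borel_measurable borel"
  unfolding periodic_ball_def by measurable

lemma periodic_ball_bounds: "0 \<le> periodic_ball \<rho> a u" "periodic_ball \<rho> a u \<le> 1" "\<bar>periodic_ball \<rho> a u\<bar> \<le> 1"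
  by (auto simp: periodic_ball_def)

lemma periodic_ball_add: "n \<in> int_lattice \<Longrightarrow> periodic_ball \<rho> a (u + n) = periodic_ball \<rho> a u"
  using lattice_residue_add[of n "u - a"] by (simp add: periodic_ball_def algebra_simps)

lemma add_in_cball_iff:
  assumes "\<rho> < 1/2" "n \<in> int_lattice"
  shows "u + n \<in> cball a \<rho> \<longleftrightarrow>
    norm (lattice_residue (u - a)) \<le> \<rho> \<and> n = lattice_residue (u - a) - (u - a)"
proof
  assume n: "u + n \<in> cball a \<rho>"
  then have "norm (lattice_residue (u - a)) \<le> \<rho>"
    using norm_lattice_residue_le[OF int_lattice_uminus[OF assms(2)], of "u - a"]
    by (simp add: dist_norm norm_minus_commute algebra_simps)
  moreover have "lattice_residue (u - a) - (u - a) \<in> int_lattice"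
    using int_lattice_uminus[OF lattice_residue_diff] by simp
  moreover have "norm (n - (lattice_residue (u - a) - (u - a))) < 1"
    using n \<open>norm (lattice_residue (u - a)) \<le> \<rho>\<close> assms(1)
      norm_triangle_ineq4[of "u + n - a" "lattice_residue (u - a)"]
    by (simp add: dist_norm norm_minus_commute algebra_simps)
  ultimately show "norm (lattice_residue (u - a)) \<le> \<rho> \<and> n = lattice_residue (u - a) - (u - a)"
    using assms(2) int_lattice_eqI by blast
qed (simp add: dist_norm norm_minus_commute algebra_simps)

lemma nearest_translate_in_lattice_window:
  assumes "u \<in> unit_cube"
  shows "lattice_residue (u - a) - (u - a) \<in> lattice_window (norm a + 2)"
proof -
  have "\<bar>(lattice_residue (u - a) - (u - a)) $ i\<bar> \<le> norm a + 2" for i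
  proof -
    have "0 \<le> u $ i" "u $ i < 1"
      using assms unfolding unit_cube_def by blast+
    then show ?thesis
      using abs_lattice_residue_component[of "u - a" i] component_le_norm_cart[of a i]
      by (simp add: abs_le_iff) linarith
  qed
  then show ?thesis
    using int_lattice_uminus[OF lattice_residue_diff[of "u - a"]] by (simp add: lattice_window_def)
qed

lemma sum_indicator_cball_add:
  assumes "\<rho> < 1/2" "u \<in> unit_cube"
  shows "(\<Sum>n\<in>lattice_window (norm a + 2). indicator (cball a \<rho>) (u + n) :: real) = periodic_ball \<rho> a u"
proof -
  let ?n0 = "lattice_residue (u - a) - (u - a)"
  have "indicator (cball a \<rho>) (u + n) = (if n = ?n0 then periodic_ball \<rho> a u else 0)"
    if "n \<in> lattice_window (norm a + 2)" for n
    using add_in_cball_iff[OF assms(1), of n u a] that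
    by (auto simp: indicator_def periodic_ball_def lattice_window_def dist_norm)
  then have "(\<Sum>n\<in>lattice_window (norm a + 2). indicator (cball a \<rho>) (u + n) :: real)
      = (\<Sum>n\<in>lattice_window (norm a + 2). if n = ?n0 then periodic_ball \<rho> a u else 0)"
    by (rule sum.cong[OF refl])
  then show ?thesis
    using nearest_translate_in_lattice_window[OF assms(2), of a] by (simp add: sum.delta[OF lattice_window(1)])
qed

lemma cube_integral_periodic_ball_mult:
  fixes P :: "real^'d \<Rightarrow> complex"
  assumes "\<rho> < 1/2" "bounded_borel P" "\<And>u n. n \<in> int_lattice \<Longrightarrow> P (u + n) = P u"
  shows "cube_integral (\<lambda>u. of_real (periodic_ball \<rho> a u) * P u)
           = (\<integral>v. of_real (indicator (cball a \<rho>) v) * P v \<partial>lborel)"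
proof -
  have support: "norm v \<le> norm a + 1 \<and> lattice_floor v \<in> lattice_window (norm a + 2)"
    if "indicator (cball a \<rho>) v \<noteq> (0::real)" for v
  proof -
    have "norm v \<le> norm a + 1"
      using that assms(1) norm_triangle_ineq[of a "v - a"]
      by (auto simp: indicator_def dist_norm norm_minus_commute split: if_splits)
    then show ?thesis
      using lattice_floor_in_lattice_window by (fastforce simp: algebra_simps)
  qed
  have "(\<integral>v. of_real (indicator (cball a \<rho>) v) * P v \<partial>lborel)
      = cube_integral (\<lambda>u. of_real (\<Sum>n\<in>lattice_window (norm a + 2). indicator (cball a \<rho>) (u + n)) * P u)"
    using assms(2,3) support lattice_window
    by (intro integral_lborel_eq_cube_integral[where B=1]) (auto simp: indicator_def lattice_window_def)
  also have "\<dots> = cube_integral (\<lambda>u. of_real (periodic_ball \<rho> a u) * P u)"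
  proof -
    have "of_real (indicator unit_cube u) * (of_real (\<Sum>n\<in>lattice_window (norm a + 2). indicator (cball a \<rho>) (u + n)) * P u)
        = of_real (indicator unit_cube u) * (of_real (periodic_ball \<rho> a u) * P u)" for u
      by (cases "u \<in> unit_cube") (simp_all add: sum_indicator_cball_add[OF assms(1)] del: of_real_sum)
    then show ?thesis
      by (simp only: cube_integral_def)
  qed
  finally show ?thesis ..
qed

definition ball_fourier :: "real \<Rightarrow> real^'d \<Rightarrow> complex" where
  "ball_fourier \<rho> l = (\<integral>w. of_real (indicator (cball 0 \<rho>) w) * cis2pi (- (l \<bullet> w)) \<partial>lborel)"

lemma fourier_coeff_periodic_ball:
  fixes a l :: "real^'d"
  assumes "\<rho> < 1/2" "l \<in> int_lattice"
  shows "fourier_coeff (\<lambda>u. of_real (periodic_ball \<rho> a u)) l = cis2pi (- (l \<bullet> a)) * ball_fourier \<rho> l"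
proof -
  have periodic: "cis2pi (- (l \<bullet> (u + n))) = cis2pi (- (l \<bullet> u))" if "n \<in> int_lattice" for u n
    using cis2pi_inner_add_int_lattice[OF assms(2) that, of u] by (metis cnj_cis2pi)
  have "fourier_coeff (\<lambda>u. of_real (periodic_ball \<rho> a u)) l
      = (\<integral>v. of_real (indicator (cball a \<rho>) v) * cis2pi (- (l \<bullet> v)) \<partial>lborel)"
    unfolding fourier_coeff_def using assms(1) periodic
    by (intro cube_integral_periodic_ball_mult bounded_borel_intros)
  also have "\<dots> = (\<integral>w. of_real (indicator (cball a \<rho>) (w + a)) * cis2pi (- (l \<bullet> (w + a))) \<partial>lborel)"
  proof (intro integral_lborel_add)
    have "(indicator (cball a \<rho>) :: real^'d \<Rightarrow> real) \<in> borel_measurable borel"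
      by (intro borel_measurable_indicator) simp
    then show "(\<lambda>v. of_real (indicator (cball a \<rho>) v) * cis2pi (- (l \<bullet> v))) \<in> borel_measurable borel"
      by measurable
  qed
  also have "\<dots> = (\<integral>w. cis2pi (- (l \<bullet> a)) * (of_real (indicator (cball 0 \<rho>) w) * cis2pi (- (l \<bullet> w))) \<partial>lborel)"
    by (intro Bochner_Integration.integral_cong refl)
       (simp add: indicator_def dist_norm inner_add_right cis2pi_add[symmetric] add.commute)
  also have "\<dots> = cis2pi (- (l \<bullet> a)) * ball_fourier \<rho> l"
    unfolding ball_fourier_def by (rule integral_mult_right_zero)
  finally show ?thesis .
qed

lemma integrable_unit_cube_mult_real:
  fixes f :: "real^'d \<Rightarrow> real"
  assumes "f \<in> borel_measurable borel" "\<And>u. \<bar>f u\<bar> \<le> B"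
  shows "integrable lborel (\<lambda>u. indicator unit_cube u * f u)"
  using assms integrableI_bounded_set_indicator[of unit_cube lborel f B]
  by (simp add: emeasure_unit_cube)

lemma integral_periodic_ball_mult:
  fixes a b :: "real^'d"
  assumes "\<rho> < 1/2"
  shows "(\<integral>u. indicator unit_cube u * (periodic_ball \<rho> a u * periodic_ball \<rho> b u) \<partial>lborel)
           = (\<integral>v. indicator (cball a \<rho>) v * periodic_ball \<rho> b v \<partial>lborel)"
proof -
  have "cube_integral (\<lambda>u. of_real (periodic_ball \<rho> a u) * of_real (periodic_ball \<rho> b u))
      = (\<integral>v. of_real (indicator (cball a \<rho>) v) * of_real (periodic_ball \<rho> b v) \<partial>lborel)"
    using assms periodic_ball_bounds(3) periodic_ball_add
    by (intro cube_integral_periodic_ball_mult bounded_borel_intros) auto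
  then have "complex_of_real (\<integral>u. indicator unit_cube u * (periodic_ball \<rho> a u * periodic_ball \<rho> b u) \<partial>lborel)
      = complex_of_real (\<integral>v. indicator (cball a \<rho>) v * periodic_ball \<rho> b v \<partial>lborel)"
    by (simp add: cube_integral_def integral_complex_of_real[symmetric])
  then show ?thesis
    by (simp only: of_real_eq_iff)
qed

lemma integrable_indicator_cball: "integrable lborel (indicator (cball (a::'a::euclidean_space) r) :: 'a \<Rightarrow> real)"
  using emeasure_lborel_cball_finite[of a r] by (intro integrable_real_indicator) auto

lemma periodic_ball_neq_0_imp:
  assumes "periodic_ball \<rho> b v \<noteq> 0"
  obtains q where "q \<in> int_lattice" "v \<in> cball (b + q) \<rho>"
proof
  show "(v - b) - lattice_residue (v - b) \<in> int_lattice"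
    by (rule lattice_residue_diff)
  show "v \<in> cball (b + ((v - b) - lattice_residue (v - b))) \<rho>"
    using assms by (simp add: periodic_ball_def dist_norm split: if_splits)
qed

lemma integral_indicator_mult_periodic_ball_le:
  fixes a b :: "real^'d"
  shows "(\<integral>v. indicator (cball a \<rho>) v * periodic_ball \<rho> b v \<partial>lborel) \<le> measure lborel (cball (0::real^'d) \<rho>)"
proof -
  have "(\<integral>v. indicator (cball a \<rho>) v * periodic_ball \<rho> b v \<partial>lborel) \<le> (\<integral>v. indicator (cball a \<rho>) v \<partial>lborel)"
    by (rule integral_mono'[OF integrable_indicator_cball]) (auto simp: indicator_def periodic_ball_def)
  then show ?thesis
    using measure_lborel_cball_eq[of a \<rho>] by simp
qed

lemma integral_indicator_mult_periodic_ball_le_lens: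
  fixes a b q :: "real^'d"
  assumes "\<rho> < 1/4" "q \<in> int_lattice" "norm (a - b - q) \<le> 2 * \<rho>"
  shows "(\<integral>v. indicator (cball a \<rho>) v * periodic_ball \<rho> b v \<partial>lborel) \<le> lens_volume \<rho> (b + q - a)"
proof -
  have "indicator (cball a \<rho>) v * periodic_ball \<rho> b v \<le> indicator (cball a \<rho> \<inter> cball (b + q) \<rho>) v" for v
  proof (cases "v \<in> cball a \<rho> \<and> periodic_ball \<rho> b v \<noteq> 0")
    case True
    then obtain q' where q': "q' \<in> int_lattice" "v \<in> cball (b + q') \<rho>"
      using periodic_ball_neq_0_imp by blast
    have "norm (q - q') \<le> norm (a - b - q') + norm (a - b - q)"
      using norm_triangle_ineq4[of "a - b - q'" "a - b - q"] by (simp add: algebra_simps)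
    also have "\<dots> \<le> dist a v + dist v (b + q') + 2 * \<rho>"
      using assms(3) dist_triangle[of a "b + q'" v] by (simp add: dist_norm algebra_simps)
    also have "\<dots> < 1"
      using True q'(2) assms(1) by (simp add: dist_commute)
    finally have "q = q'"
      using int_lattice_eqI[OF assms(2) q'(1)] by simp
    then show ?thesis
      using True q' periodic_ball_bounds(2)[of \<rho> b v] by (simp add: indicator_def)
  qed (auto simp: periodic_ball_def)
  then have "(\<integral>v. indicator (cball a \<rho>) v * periodic_ball \<rho> b v \<partial>lborel)
      \<le> (\<integral>v. indicator (cball a \<rho> \<inter> cball (b + q) \<rho>) v \<partial>lborel)"
    using fmeasurable_cball_Int_cball[of a \<rho> "b + q" \<rho>]
    by (intro integral_mono') (auto intro: integrable_real_indicator simp: fmeasurable_def)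
  then show ?thesis
    using lens_volume_translate[of a \<rho> "b + q"] by simp
qed

lemma integral_indicator_mult_periodic_ball_le_profile:
  fixes a b :: "real^'d" and U :: "real \<Rightarrow> real"
  assumes "\<rho> < 1/4" and U: "\<And>y::real^'d. lens_volume \<rho> y \<le> U (norm y)"
    and U_anti: "\<And>r r'. 0 \<le> r \<Longrightarrow> r \<le> r' \<Longrightarrow> U r' \<le> U r" and U_nonneg: "\<And>r. 0 \<le> U r"
  shows "(\<integral>v. indicator (cball a \<rho>) v * periodic_ball \<rho> b v \<partial>lborel) \<le> U (torus_dist a b)"
proof (cases "\<exists>q\<in>int_lattice. norm (a - b - q) \<le> 2 * \<rho>")
  case True
  then obtain q where q: "q \<in> int_lattice" "norm (a - b - q) \<le> 2 * \<rho>"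
    by blast
  have "torus_dist a b \<le> norm (b + q - a)"
    using torus_dist_le[OF q(1), of a b] by (simp add: norm_minus_commute algebra_simps)
  then have "U (norm (b + q - a)) \<le> U (torus_dist a b)"
    using U_anti torus_dist_nonneg by blast
  then show ?thesis
    using integral_indicator_mult_periodic_ball_le_lens[OF assms(1) q] U[of "b + q - a"] by linarith
next
  case False
  have "indicator (cball a \<rho>) v * periodic_ball \<rho> b v = 0" for v
  proof (rule ccontr)
    assume "indicator (cball a \<rho>) v * periodic_ball \<rho> b v \<noteq> 0"
    then obtain q where "q \<in> int_lattice" "v \<in> cball (b + q) \<rho>" "v \<in> cball a \<rho>"
      using periodic_ball_neq_0_imp by (metis indicator_simps(2) mult_eq_0_iff)
    then show False
      using False dist_triangle[of a "b + q" v] by (auto simp: dist_norm norm_minus_commute algebra_simps)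
  qed
  then have "(\<lambda>v. indicator (cball a \<rho>) v * periodic_ball \<rho> b v) = (\<lambda>v. 0)"
    by (rule ext)
  then show ?thesis
    using U_nonneg by simp
qed

lemma ball_fourier_0: "ball_fourier \<rho> (0::real^'d) = of_real (measure lborel (cball (0::real^'d) \<rho>))"
  by (simp add: ball_fourier_def integral_complex_of_real)

lemma cos_2pi_ge_half:
  assumes "\<bar>x\<bar> \<le> 1/6"
  shows "1/2 \<le> cos (2 * pi * x)"
proof -
  have "cos (pi / 3) \<le> cos (2 * pi * \<bar>x\<bar>)"
    by (rule cos_monotone_0_pi_le) (use assms pi_gt_zero in auto)
  moreover have "cos (2 * pi * x) = cos (2 * pi * \<bar>x\<bar>)"
    by (cases "0 \<le> x") (simp_all add: abs_if)
  ultimately show ?thesis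
    by (simp add: cos_60)
qed

lemma norm_ball_fourier_ge:
  fixes l :: "real^'d"
  assumes "norm l * \<rho> \<le> 1/6"
  shows "measure lborel (cball (0::real^'d) \<rho>) / 2 \<le> norm (ball_fourier \<rho> l)"
proof -
  have int: "integrable lborel (\<lambda>w. of_real (indicator (cball 0 \<rho>) w) * cis2pi (- (l \<bullet> w)))"
  proof (intro integrableI_bounded_set[where A="cball 0 \<rho>" and B=1])
    show "emeasure lborel (cball (0::real^'d) \<rho>) < \<infinity>"
      by (rule emeasure_lborel_cball_finite)
  qed (auto simp: norm_mult indicator_def)
  have "Re (ball_fourier \<rho> l) = (\<integral>w. indicator (cball 0 \<rho>) w * cos (2 * pi * (- (l \<bullet> w))) \<partial>lborel)"
    unfolding ball_fourier_def integral_Re[OF int, symmetric] by (simp add: cis2pi_def)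
  also have "\<dots> \<ge> (\<integral>w. indicator (cball 0 \<rho>) (w::real^'d) * (1/2) \<partial>lborel)"
  proof (rule integral_mono)
    show "integrable lborel (\<lambda>w. indicator (cball 0 \<rho>) w * cos (2 * pi * (- (l \<bullet> w))))"
      using integrable_Re[OF int] by (simp add: cis2pi_def)
    show "integrable lborel (\<lambda>w. indicator (cball (0::real^'d) \<rho>) w * (1/2 :: real))"
      by (intro integrable_mult_left integrable_indicator_cball)
    fix w :: "real^'d"
    show "indicator (cball 0 \<rho>) w * (1/2) \<le> indicator (cball 0 \<rho>) w * cos (2 * pi * (- (l \<bullet> w)))"
    proof (cases "w \<in> cball 0 \<rho>")
      case True
      then have "\<bar>l \<bullet> w\<bar> \<le> norm l * \<rho>"
        using Cauchy_Schwarz_ineq2[of l w] mult_left_mono[of "norm w" \<rho> "norm l"] by auto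
      then show ?thesis
        using True assms cos_2pi_ge_half[of "- (l \<bullet> w)"] by simp
    qed simp
  qed
  finally show ?thesis
    using complex_Re_le_cmod[of "ball_fourier \<rho> l"] by simp
qed

section \<open>Exponential sums and pair sums\<close>

definition periodic_balls :: "real \<Rightarrow> (nat \<Rightarrow> real^'d) \<Rightarrow> nat \<Rightarrow> real^'d \<Rightarrow> real" where
  "periodic_balls \<rho> x N u = (\<Sum>k=1..N. periodic_ball \<rho> (x k) u)"

lemma fourier_coeff_periodic_balls:
  assumes "\<rho> < 1/2" "l \<in> int_lattice"
  shows "fourier_coeff (\<lambda>u. of_real (periodic_balls \<rho> x N u)) l
           = ball_fourier \<rho> l * cnj (\<Sum>k=1..N. cis2pi (l \<bullet> x k))"
proof -
  have "fourier_coeff (\<lambda>u. of_real (periodic_balls \<rho> x N u)) l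
      = (\<Sum>k=1..N. fourier_coeff (\<lambda>u. of_real (periodic_ball \<rho> (x k) u)) l)"
    unfolding fourier_coeff_def periodic_balls_def of_real_sum sum_distrib_right
    using periodic_ball_bounds(3)
    by (intro cube_integral_sum bounded_borel_intros) auto
  also have "\<dots> = (\<Sum>k=1..N. cis2pi (- (l \<bullet> x k)) * ball_fourier \<rho> l)"
    using assms by (simp add: fourier_coeff_periodic_ball)
  finally show ?thesis
    by (simp add: sum_distrib_left cnj_cis2pi mult.commute)
qed

lemma integral_periodic_balls_square_le:
  fixes x :: "nat \<Rightarrow> real^'d" and U :: "real \<Rightarrow> real"
  assumes "\<rho> < 1/4" and U: "\<And>y::real^'d. lens_volume \<rho> y \<le> U (norm y)"
    and U_anti: "\<And>r r'. 0 \<le> r \<Longrightarrow> r \<le> r' \<Longrightarrow> U r' \<le> U r" and U_nonneg: "\<And>r. 0 \<le> U r"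
  shows "(\<integral>u. indicator unit_cube u * (periodic_balls \<rho> x N u)\<^sup>2 \<partial>lborel)
           \<le> real N * measure lborel (cball (0::real^'d) \<rho>)
             + (\<Sum>k\<in>{1..N}. \<Sum>k'\<in>{1..N} - {k}. U (torus_dist (x k) (x k')))"
proof -
  define V where "V = measure lborel (cball (0::real^'d) \<rho>)"
  define I where "I k k' = (\<integral>v. indicator (cball (x k) \<rho>) v * periodic_ball \<rho> (x k') v \<partial>lborel)" for k k'
  have "(\<integral>u. indicator unit_cube u * (periodic_balls \<rho> x N u)\<^sup>2 \<partial>lborel)
      = (\<integral>u. (\<Sum>k\<in>{1..N}. \<Sum>k'\<in>{1..N}. indicator unit_cube u * (periodic_ball \<rho> (x k) u * periodic_ball \<rho> (x k') u)) \<partial>lborel)"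
    unfolding periodic_balls_def power2_eq_square sum_product unfolding sum_distrib_left ..
  also have "\<dots> = (\<Sum>k\<in>{1..N}. \<Sum>k'\<in>{1..N}. I k k')"
  proof -
    have "integrable lborel (\<lambda>u. indicator unit_cube u * (periodic_ball \<rho> (x k) u * periodic_ball \<rho> (x k') u))" for k k'
      using periodic_ball_bounds
      by (intro integrable_unit_cube_mult_real[where B=1]) (auto simp: abs_mult intro!: mult_le_one)
    moreover have "\<rho> < 1/2"
      using assms(1) by simp
    ultimately show ?thesis
      by (simp only: Bochner_Integration.integral_sum Bochner_Integration.integrable_sum I_def
          integral_periodic_ball_mult)
  qed
  also have "\<dots> \<le> (\<Sum>k\<in>{1..N}. V + (\<Sum>k'\<in>{1..N} - {k}. U (torus_dist (x k) (x k'))))"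
  proof (rule sum_mono)
    fix k assume "k \<in> {1..N}"
    then have "(\<Sum>k'\<in>{1..N}. I k k') = I k k + (\<Sum>k'\<in>{1..N} - {k}. I k k')"
      by (simp add: sum.remove)
    also have "\<dots> \<le> V + (\<Sum>k'\<in>{1..N} - {k}. U (torus_dist (x k) (x k')))"
      unfolding I_def V_def using assms
      by (intro add_mono sum_mono integral_indicator_mult_periodic_ball_le
          integral_indicator_mult_periodic_ball_le_profile) auto
    finally show "(\<Sum>k'\<in>{1..N}. I k k') \<le> V + (\<Sum>k'\<in>{1..N} - {k}. U (torus_dist (x k) (x k')))" .
  qed
  finally show ?thesis
    by (simp add: sum.distrib V_def)
qed

lemma abs_periodic_balls_le: "\<bar>periodic_balls \<rho> x N u\<bar> \<le> real N"
proof -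
  have "\<bar>periodic_balls \<rho> x N u\<bar> \<le> (\<Sum>k=1..N. \<bar>periodic_ball \<rho> (x k) u\<bar>)"
    unfolding periodic_balls_def by (rule sum_abs)
  also have "\<dots> \<le> (\<Sum>k=1..N. 1)"
    by (intro sum_mono periodic_ball_bounds)
  finally show ?thesis
    by simp
qed

lemma norm_fourier_coeff_periodic_balls_ge:
  fixes x :: "nat \<Rightarrow> real^'d"
  assumes "\<rho> < 1/2" "l \<in> int_lattice" "norm l * \<rho> \<le> 1/6"
  shows "measure lborel (cball (0::real^'d) \<rho>) / 2 * norm (\<Sum>k=1..N. cis2pi (l \<bullet> x k))
           \<le> norm (fourier_coeff (\<lambda>u. of_real (periodic_balls \<rho> x N u)) l)"
proof -
  have "measure lborel (cball (0::real^'d) \<rho>) / 2 \<le> norm (ball_fourier \<rho> l)"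
    using assms(3) by (rule norm_ball_fourier_ge)
  moreover have "norm (fourier_coeff (\<lambda>u. of_real (periodic_balls \<rho> x N u)) l)
      = norm (ball_fourier \<rho> l) * norm (\<Sum>k=1..N. cis2pi (l \<bullet> x k))"
    using assms(1,2) by (simp only: fourier_coeff_periodic_balls norm_mult complex_mod_cnj)
  ultimately show ?thesis
    by (metis mult_right_mono norm_ge_zero)
qed

lemma exp_sums_le_pair_sum:
  fixes x :: "nat \<Rightarrow> real^'d" and U :: "real \<Rightarrow> real" and \<Lambda> :: "(real^'d) set"
  assumes "\<rho> < 1/4" and U: "\<And>y::real^'d. lens_volume \<rho> y \<le> U (norm y)"
    and U_anti: "\<And>r r'. 0 \<le> r \<Longrightarrow> r \<le> r' \<Longrightarrow> U r' \<le> U r" and U_nonneg: "\<And>r. 0 \<le> U r"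
    and \<Lambda>: "finite \<Lambda>" "\<Lambda> \<subseteq> int_lattice" "0 \<notin> \<Lambda>" "\<And>l. l \<in> \<Lambda> \<Longrightarrow> norm l * \<rho> \<le> 1/6"
  defines "V \<equiv> measure lborel (cball (0::real^'d) \<rho>)"
  shows "V\<^sup>2 * (real N)\<^sup>2 + (V/2)\<^sup>2 * (\<Sum>l\<in>\<Lambda>. (norm (\<Sum>k=1..N. exp (complex_of_real (2 * pi * (l \<bullet> x k)) * \<i>)))\<^sup>2)
         \<le> real N * V + (\<Sum>k\<in>{1..N}. \<Sum>k'\<in>{1..N} - {k}. U (torus_dist (x k) (x k')))"
proof -
  define a where "a = fourier_coeff (\<lambda>u. of_real (periodic_balls \<rho> x N u))"
  have "(\<Sum>l\<in>insert 0 \<Lambda>. (norm (a l))\<^sup>2) \<le> (\<integral>u. indicator unit_cube u * (periodic_balls \<rho> x N u)\<^sup>2 \<partial>lborel)"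
    unfolding a_def using \<Lambda>(1,2) abs_periodic_balls_le
    by (intro bessel_inequality[where B="real N"]) (auto simp: periodic_balls_def)
  also have "\<dots> \<le> real N * V + (\<Sum>k\<in>{1..N}. \<Sum>k'\<in>{1..N} - {k}. U (torus_dist (x k) (x k')))"
    unfolding V_def using assms(1) U U_anti U_nonneg by (rule integral_periodic_balls_square_le)
  moreover have "(norm (a 0))\<^sup>2 = V\<^sup>2 * (real N)\<^sup>2"
    using assms(1) by (simp add: a_def fourier_coeff_periodic_balls ball_fourier_0 V_def norm_mult power_mult_distrib)
  moreover have "(V/2)\<^sup>2 * (norm (\<Sum>k=1..N. exp (complex_of_real (2 * pi * (l \<bullet> x k)) * \<i>)))\<^sup>2 \<le> (norm (a l))\<^sup>2"
    if "l \<in> \<Lambda>" for l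
  proof -
    have "V / 2 * norm (\<Sum>k=1..N. cis2pi (l \<bullet> x k)) \<le> norm (a l)"
      unfolding a_def V_def using assms(1) that \<Lambda>(2,4)
      by (intro norm_fourier_coeff_periodic_balls_ge) auto
    then have "(V / 2 * norm (\<Sum>k=1..N. cis2pi (l \<bullet> x k)))\<^sup>2 \<le> (norm (a l))\<^sup>2"
      by (rule power_mono) (simp add: V_def)
    then show ?thesis
      by (simp only: cis2pi_conv_exp power_mult_distrib)
  qed
  then have "(V/2)\<^sup>2 * (\<Sum>l\<in>\<Lambda>. (norm (\<Sum>k=1..N. exp (complex_of_real (2 * pi * (l \<bullet> x k)) * \<i>)))\<^sup>2)
      \<le> (\<Sum>l\<in>\<Lambda>. (norm (a l))\<^sup>2)"
    unfolding sum_distrib_left by (rule sum_mono)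
  ultimately show ?thesis
    using \<Lambda>(1,3) by simp
qed

section \<open>Step functions for the lens profile\<close>

lemma measure_cball_eq:
  "0 \<le> r \<Longrightarrow> measure lborel (cball (0::real^'d) r) = measure lborel (cball (0::real^'d) 1) * r ^ CARD('d)"
  by (simp add: measure_def emeasure_cball)

lemma power_diff_le:
  fixes x y :: real
  assumes "0 \<le> y" "y \<le> x"
  shows "x ^ n - y ^ n \<le> real n * x ^ (n - 1) * (x - y)"
proof (induction n)
  case (Suc n)
  have "x ^ Suc n - y ^ Suc n = x * (x ^ n - y ^ n) + y ^ n * (x - y)"
    by (simp add: algebra_simps)
  also have "\<dots> \<le> x * (real n * x ^ (n - 1) * (x - y)) + x ^ n * (x - y)"
    using Suc assms by (intro add_mono mult_left_mono mult_right_mono power_mono) auto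
  also have "\<dots> = real (Suc n) * x ^ (Suc n - 1) * (x - y)"
    by (cases n) (simp_all add: algebra_simps)
  finally show ?case .
qed simp

lemma antimono_step_bounds:
  fixes h t :: "_ \<Rightarrow> real"
  assumes anti: "\<And>a b. 0 \<le> a \<Longrightarrow> a \<le> b \<Longrightarrow> h b \<le> h a"
    and t: "\<And>j. t j \<le> t (Suc j)" "0 \<le> t 0" and r: "t 0 \<le> r" "r \<le> t M"
  shows "(\<Sum>j<M. (h (t j) - h (t (Suc j))) * of_bool (r \<le> t j)) + h (t M) \<le> h r"
    and "h r \<le> (\<Sum>j<M. (h (t j) - h (t (Suc j))) * of_bool (r \<le> t (Suc j))) + h (t M)"
proof -
  define d where "d j = h (max r (t j)) - h (max r (t (Suc j)))" for j
  have "(\<Sum>j<M. d j) = h r - h (t M)"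
    unfolding d_def using sum_lessThan_telescope'[of "\<lambda>j. h (max r (t j))" M] r by (simp add: max_def)
  moreover have "0 \<le> t j" for j
    using t by (induction j) (auto intro: order_trans)
  then have "(h (t j) - h (t (Suc j))) * of_bool (r \<le> t j) \<le> d j"
    and "d j \<le> (h (t j) - h (t (Suc j))) * of_bool (r \<le> t (Suc j))" for j
    using anti[of "t j" r] anti[of r "t (Suc j)"] t(1)[of j] r(1) \<open>0 \<le> t 0\<close> unfolding d_def
    by (auto simp: max_def)
  ultimately show "(\<Sum>j<M. (h (t j) - h (t (Suc j))) * of_bool (r \<le> t j)) + h (t M) \<le> h r"
    and "h r \<le> (\<Sum>j<M. (h (t j) - h (t (Suc j))) * of_bool (r \<le> t (Suc j))) + h (t M)"
    using sum_mono[of "{..<M}" "\<lambda>j. (h (t j) - h (t (Suc j))) * of_bool (r \<le> t j)" d]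
      sum_mono[of "{..<M}" d "\<lambda>j. (h (t j) - h (t (Suc j))) * of_bool (r \<le> t (Suc j))"]
    by auto
qed

text \<open>By radial symmetry any unit vector would do in place of the arbitrary coordinate axis.\<close>

definition lens_profile :: "'d::finite itself \<Rightarrow> real \<Rightarrow> real \<Rightarrow> real" where
  "lens_profile _ \<rho> r = lens_volume \<rho> (r *\<^sub>R axis (undefined::'d) 1 :: real^'d)"

lemma lens_profile_norm: "lens_profile TYPE('d::finite) \<rho> (norm y) = lens_volume \<rho> (y::real^'d)"
  unfolding lens_profile_def by (rule lens_volume_eq_if_norm_eq) simp

lemma lens_profile_antimono:
  "0 \<le> r \<Longrightarrow> r \<le> r' \<Longrightarrow> lens_profile TYPE('d::finite) \<rho> r' \<le> lens_profile TYPE('d) \<rho> r"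
  unfolding lens_profile_def by (rule lens_volume_antimono) simp

lemma lens_profile_nonneg: "0 \<le> lens_profile D \<rho> r"
  by (simp add: lens_profile_def lens_volume_nonneg)

lemma lens_profile_0: "lens_profile TYPE('d::finite) \<rho> 0 = measure lborel (cball (0::real^'d) \<rho>)"
  by (simp add: lens_profile_def lens_volume_0)

lemma lens_profile_eq_0: "0 \<le> \<rho> \<Longrightarrow> 2 * \<rho> \<le> r \<Longrightarrow> lens_profile D \<rho> r = 0"
  unfolding lens_profile_def by (rule lens_volume_eq_0) simp

definition radius_grid :: "real \<Rightarrow> nat \<Rightarrow> nat \<Rightarrow> real" where
  "radius_grid \<rho> M j = 2 * \<rho> * real j / real M"

lemma radius_grid_nonneg: "0 \<le> \<rho> \<Longrightarrow> 0 \<le> radius_grid \<rho> M j"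
  by (simp add: radius_grid_def)

lemma radius_grid_mono: "0 \<le> \<rho> \<Longrightarrow> radius_grid \<rho> M j \<le> radius_grid \<rho> M (Suc j)"
  unfolding radius_grid_def by (intro divide_right_mono mult_left_mono) auto

lemma radius_grid_le: "0 \<le> \<rho> \<Longrightarrow> j \<le> M \<Longrightarrow> radius_grid \<rho> M j \<le> 2 * \<rho>"
  by (cases "M = 0") (simp_all add: radius_grid_def field_simps mult_left_mono)

lemma radius_grid_last: "0 < M \<Longrightarrow> radius_grid \<rho> M M = 2 * \<rho>"
  by (simp add: radius_grid_def)

text \<open>The upper step function is a combination of indicators of balls, so its sums over pairs of
  points are pair counts, which the pair-correlation hypothesis controls.\<close>

definition lens_step_coeff :: "'d::finite itself \<Rightarrow> real \<Rightarrow> nat \<Rightarrow> nat \<Rightarrow> real" where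
  "lens_step_coeff D \<rho> M j = lens_profile D \<rho> (radius_grid \<rho> M j) - lens_profile D \<rho> (radius_grid \<rho> M (Suc j))"

definition lens_step_upper :: "'d::finite itself \<Rightarrow> real \<Rightarrow> nat \<Rightarrow> real \<Rightarrow> real" where
  "lens_step_upper D \<rho> M r = (\<Sum>j<M. lens_step_coeff D \<rho> M j * of_bool (r \<le> radius_grid \<rho> M (Suc j)))"

definition lens_step_lower :: "'d::finite itself \<Rightarrow> real \<Rightarrow> nat \<Rightarrow> real \<Rightarrow> real" where
  "lens_step_lower D \<rho> M r = (\<Sum>j<M. lens_step_coeff D \<rho> M j * of_bool (r \<le> radius_grid \<rho> M j))"

lemma lens_step_coeff_nonneg: "0 \<le> \<rho> \<Longrightarrow> 0 \<le> lens_step_coeff TYPE('d::finite) \<rho> M j"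
  unfolding lens_step_coeff_def
  using lens_profile_antimono[OF radius_grid_nonneg radius_grid_mono] by simp

lemma lens_step_coeff_le:
  assumes "0 \<le> \<rho>"
  shows "lens_step_coeff TYPE('d::finite) \<rho> M j \<le> measure lborel (cball (0::real^'d) \<rho>)"
proof -
  have "lens_profile TYPE('d) \<rho> (radius_grid \<rho> M j) \<le> lens_profile TYPE('d) \<rho> 0"
    using assms by (intro lens_profile_antimono radius_grid_nonneg) auto
  then show ?thesis
    unfolding lens_step_coeff_def
    using lens_profile_nonneg[of "TYPE('d)" \<rho> "radius_grid \<rho> M (Suc j)"] by (simp add: lens_profile_0)
qed

lemma sum_lens_step_coeff:
  "0 \<le> \<rho> \<Longrightarrow> 0 < M \<Longrightarrow> (\<Sum>j<M. lens_step_coeff TYPE('d::finite) \<rho> M j) = measure lborel (cball (0::real^'d) \<rho>)"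
proof -
  assume "0 \<le> \<rho>" "0 < M"
  have "(\<Sum>j<M. lens_step_coeff TYPE('d) \<rho> M j)
      = lens_profile TYPE('d) \<rho> (radius_grid \<rho> M 0) - lens_profile TYPE('d) \<rho> (radius_grid \<rho> M M)"
    unfolding lens_step_coeff_def by (rule sum_lessThan_telescope')
  then show ?thesis
    using \<open>0 \<le> \<rho>\<close> \<open>0 < M\<close>
    by (simp add: radius_grid_last lens_profile_eq_0 lens_profile_0 radius_grid_def[of _ _ 0])
qed

lemma lens_step_upper_nonneg: "0 \<le> \<rho> \<Longrightarrow> 0 \<le> lens_step_upper TYPE('d::finite) \<rho> M r"
  unfolding lens_step_upper_def by (intro sum_nonneg mult_nonneg_nonneg lens_step_coeff_nonneg) auto

lemma lens_step_upper_antimono: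
  "0 \<le> \<rho> \<Longrightarrow> r \<le> r' \<Longrightarrow> lens_step_upper TYPE('d::finite) \<rho> M r' \<le> lens_step_upper TYPE('d) \<rho> M r"
  unfolding lens_step_upper_def by (intro sum_mono mult_left_mono lens_step_coeff_nonneg) auto

lemma lens_step_bounds:
  fixes y :: "real^'d"
  assumes "0 \<le> \<rho>" "0 < M"
  shows "lens_step_lower TYPE('d) \<rho> M (norm y) \<le> lens_volume \<rho> y"
    and "lens_volume \<rho> y \<le> lens_step_upper TYPE('d) \<rho> M (norm y)"
proof -
  let ?h = "lens_profile TYPE('d) \<rho>" and ?t = "radius_grid \<rho> M"
  have last: "?h (?t M) = 0"
    using assms by (simp add: radius_grid_last lens_profile_eq_0)
  have step: "(\<Sum>j<M. (?h (?t j) - ?h (?t (Suc j))) * of_bool (norm y \<le> ?t j)) + ?h (?t M) \<le> ?h (norm y)"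
    "?h (norm y) \<le> (\<Sum>j<M. (?h (?t j) - ?h (?t (Suc j))) * of_bool (norm y \<le> ?t (Suc j))) + ?h (?t M)"
    if "norm y \<le> 2 * \<rho>"
  proof -
    have anti: "\<And>a b. 0 \<le> a \<Longrightarrow> a \<le> b \<Longrightarrow> ?h b \<le> ?h a"
      by (rule lens_profile_antimono)
    have "?t 0 \<le> norm y" "norm y \<le> ?t M"
      using that assms by (simp_all add: radius_grid_def)
    then show "(\<Sum>j<M. (?h (?t j) - ?h (?t (Suc j))) * of_bool (norm y \<le> ?t j)) + ?h (?t M) \<le> ?h (norm y)"
      "?h (norm y) \<le> (\<Sum>j<M. (?h (?t j) - ?h (?t (Suc j))) * of_bool (norm y \<le> ?t (Suc j))) + ?h (?t M)"
      using antimono_step_bounds[of ?h ?t, OF anti radius_grid_mono[OF assms(1)] radius_grid_nonneg[OF assms(1)]]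
      by blast+
  qed
  show "lens_step_lower TYPE('d) \<rho> M (norm y) \<le> lens_volume \<rho> y"
  proof (cases "norm y \<le> 2 * \<rho>")
    case True
    then show ?thesis
      using step(1) last unfolding lens_step_lower_def lens_step_coeff_def lens_profile_norm[symmetric]
      by linarith
  next
    case False
    then have "\<not> norm y \<le> radius_grid \<rho> M j" if "j < M" for j
      using radius_grid_le[OF assms(1), of j M] that by linarith
    then show ?thesis
      by (simp add: lens_step_lower_def lens_volume_nonneg)
  qed
  show "lens_volume \<rho> y \<le> lens_step_upper TYPE('d) \<rho> M (norm y)"
  proof (cases "norm y \<le> 2 * \<rho>")
    case True
    then show ?thesis
      using step(2) last unfolding lens_step_upper_def lens_step_coeff_def lens_profile_norm[symmetric]
      by linarith
  next
    case False
    then show ?thesis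
      using lens_volume_eq_0[of \<rho> y] lens_step_upper_nonneg[OF assms(1)] by simp
  qed
qed

lemma sum_lens_step_coeff_mult_measure_le:
  assumes "0 < \<rho>" "0 < M"
  shows "(\<Sum>j<M. lens_step_coeff TYPE('d) \<rho> M j * measure lborel (cball (0::real^'d) (radius_grid \<rho> M j)))
           \<le> (measure lborel (cball (0::real^'d) \<rho>))\<^sup>2"
proof -
  define L where "L y = (\<Sum>j<M. lens_step_coeff TYPE('d) \<rho> M j * indicator (cball 0 (radius_grid \<rho> M j)) (y::real^'d))" for y
  have L_eq: "L y = lens_step_lower TYPE('d) \<rho> M (norm y)" for y
    by (simp add: L_def lens_step_lower_def indicator_def)
  have L_nonneg: "0 \<le> L y" for y
    unfolding L_def using assms by (intro sum_nonneg mult_nonneg_nonneg lens_step_coeff_nonneg) auto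
  have L_int: "integrable lborel L"
    unfolding L_def by (intro Bochner_Integration.integrable_sum integrable_mult_right integrable_indicator_cball)
  have L_le: "L y \<le> lens_volume \<rho> y" for y
    using lens_step_bounds(1)[of \<rho> M y] assms by (simp add: L_eq)
  have "ennreal (\<integral>y. L y \<partial>lborel) = (\<integral>\<^sup>+ y. L y \<partial>lborel)"
    using L_int L_nonneg by (intro nn_integral_eq_integral[symmetric]) auto
  also have "\<dots> \<le> (\<integral>\<^sup>+ y. lens_volume \<rho> (y::real^'d) \<partial>lborel)"
    using L_le by (intro nn_integral_mono ennreal_leI)
  also have "\<dots> = ennreal ((measure lborel (cball (0::real^'d) \<rho>))\<^sup>2)"
    by (rule nn_integral_lens_volume)
  finally have "(\<integral>y. L y \<partial>lborel) \<le> (measure lborel (cball (0::real^'d) \<rho>))\<^sup>2"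
    by (rule ennreal_le_iff[THEN iffD1, rotated]) simp
  moreover have "(\<integral>y. L y \<partial>lborel) = (\<Sum>j<M. lens_step_coeff TYPE('d) \<rho> M j * measure lborel (cball (0::real^'d) (radius_grid \<rho> M j)))"
    unfolding L_def
    by (subst Bochner_Integration.integral_sum) (auto intro: integrable_mult_right integrable_indicator_cball)
  ultimately show ?thesis
    by simp
qed

lemma measure_cball_diff_le:
  assumes "0 \<le> r" "r \<le> r'"
  shows "measure lborel (cball (0::real^'d) r') - measure lborel (cball (0::real^'d) r)
           \<le> measure lborel (cball (0::real^'d) 1) * (real CARD('d) * r' ^ (CARD('d) - 1) * (r' - r))"
proof -
  have "measure lborel (cball (0::real^'d) r') - measure lborel (cball (0::real^'d) r)
      = measure lborel (cball (0::real^'d) 1) * (r' ^ CARD('d) - r ^ CARD('d))"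
    using measure_cball_eq[OF assms(1), where 'd='d] measure_cball_eq[of r', where 'd='d] assms
    by (simp only: right_diff_distrib)
  also have "\<dots> \<le> measure lborel (cball (0::real^'d) 1) * (real CARD('d) * r' ^ (CARD('d) - 1) * (r' - r))"
    by (intro mult_left_mono power_diff_le assms) simp
  finally show ?thesis .
qed

lemma sum_lens_step_upper_measure_le:
  assumes "0 < \<rho>" "0 < M"
  shows "(\<Sum>j<M. lens_step_coeff TYPE('d) \<rho> M j * measure lborel (cball (0::real^'d) (radius_grid \<rho> M (Suc j))))
           \<le> (measure lborel (cball (0::real^'d) \<rho>))\<^sup>2 * (1 + real CARD('d) * 2 ^ CARD('d) / real M)"
proof -
  define V where "V r = measure lborel (cball (0::real^'d) r)" for r
  define c where "c = lens_step_coeff TYPE('d) \<rho> M"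
  define t where "t = radius_grid \<rho> M"
  define \<delta> where "\<delta> = V 1 * real CARD('d) * 2 ^ CARD('d) * \<rho> ^ CARD('d) / real M"
  have c: "0 \<le> c j" for j
    unfolding c_def using assms(1) by (simp add: lens_step_coeff_nonneg)
  have "V (t (Suc j)) - V (t j) \<le> \<delta>" if "j < M" for j
  proof -
    have t: "0 \<le> t j" "t j \<le> t (Suc j)" "t (Suc j) \<le> 2 * \<rho>" "t (Suc j) - t j = 2 * \<rho> / real M"
      using assms that radius_grid_nonneg radius_grid_mono radius_grid_le[of \<rho> "Suc j" M]
      by (auto simp: t_def radius_grid_def diff_divide_distrib[symmetric] algebra_simps)
    have "V (t (Suc j)) - V (t j) \<le> V 1 * (real CARD('d) * t (Suc j) ^ (CARD('d) - 1) * (2 * \<rho> / real M))"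
      using measure_cball_diff_le[OF t(1,2)] t(4) by (simp add: V_def)
    also have "\<dots> \<le> V 1 * (real CARD('d) * (2 * \<rho>) ^ (CARD('d) - 1) * (2 * \<rho> / real M))"
      using t assms by (intro mult_left_mono mult_right_mono power_mono) (auto simp: V_def)
    also have "\<dots> = \<delta>"
      using power_minus_mult[of "CARD('d)" "2 * \<rho>"]
      by (simp add: \<delta>_def field_simps power_mult_distrib)
    finally show ?thesis .
  qed
  then have "(\<Sum>j<M. c j * V (t (Suc j))) - (\<Sum>j<M. c j * V (t j)) \<le> (\<Sum>j<M. c j) * \<delta>"
    unfolding sum_distrib_right sum_subtractf[symmetric] right_diff_distrib[symmetric]
    by (intro sum_mono mult_left_mono c) auto
  moreover have "(\<Sum>j<M. c j) = V \<rho>"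
    unfolding c_def V_def using assms by (simp add: sum_lens_step_coeff)
  moreover have "(\<Sum>j<M. c j * V (t j)) \<le> (V \<rho>)\<^sup>2"
    unfolding c_def t_def V_def using assms by (rule sum_lens_step_coeff_mult_measure_le)
  moreover have "V \<rho> * \<delta> = (V \<rho>)\<^sup>2 * (real CARD('d) * 2 ^ CARD('d) / real M)"
    using measure_cball_eq[of \<rho>, where 'd='d] assms by (simp add: V_def \<delta>_def power2_eq_square field_simps)
  ultimately show ?thesis
    by (simp add: c_def t_def V_def algebra_simps)
qed


section \<open>Pair correlations and the limit\<close>

lemma sum_offdiagonal_of_bool_eq_card:
  fixes P :: "nat \<Rightarrow> nat \<Rightarrow> bool"
  shows "(\<Sum>k\<in>{1..N}. \<Sum>k'\<in>{1..N} - {k}. (of_bool (P k k') :: real))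
       = real (card {(m, n). m \<in> {1..N} \<and> n \<in> {1..N} \<and> m \<noteq> n \<and> P m n})"
proof -
  have "{(m, n). m \<in> {1..N} \<and> n \<in> {1..N} \<and> m \<noteq> n \<and> P m n} = Sigma {1..N} (\<lambda>m. ({1..N} - {m}) \<inter> {n. P m n})"
    by auto
  then have "card {(m, n). m \<in> {1..N} \<and> n \<in> {1..N} \<and> m \<noteq> n \<and> P m n} = (\<Sum>m\<in>{1..N}. card (({1..N} - {m}) \<inter> {n. P m n}))"
    by (simp add: card_SigmaI)
  then show ?thesis
    by (simp add: sum_of_bool_eq)
qed

lemma root_powr_power:
  assumes "0 < x" "0 < n"
  shows "(x powr (1 / real n)) ^ n = x"
proof -
  have "(x powr (1 / real n)) ^ n = x powr (real n * (1 / real n))"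
    using assms by (subst powr_power) auto
  then show ?thesis
    using assms by simp
qed

lemma close_pairs_eq_sum:
  fixes x :: "nat \<Rightarrow> real^'d"
  shows "real (close_pairs x s N) = (\<Sum>k\<in>{1..N}. \<Sum>k'\<in>{1..N} - {k}.
           of_bool (torus_dist (x k) (x k') \<le> s / real N powr (1 / real CARD('d))))"
  unfolding close_pairs_def by (rule sum_offdiagonal_of_bool_eq_card[symmetric])

definition pair_correlation_error :: "(nat \<Rightarrow> real^'d) \<Rightarrow> real \<Rightarrow> nat \<Rightarrow> real" where
  "pair_correlation_error x s N = \<bar>real (close_pairs x s N) / real N - unit_ball_vol TYPE('d) * s ^ CARD('d)\<bar>"

lemma unit_ball_vol_eq: "unit_ball_vol TYPE('d::finite) = measure lborel (cball (0::real^'d) 1)"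
  unfolding unit_ball_vol_def using content_cball_conv_ball[of "0::real^'d" 1] by simp

lemma close_pairs_le:
  fixes x :: "nat \<Rightarrow> real^'d"
  assumes "0 < N"
  shows "real (close_pairs x s N)
           \<le> real N * (unit_ball_vol TYPE('d) * s ^ CARD('d)) + real N * pair_correlation_error x s N"
proof -
  have "real (close_pairs x s N) / real N \<le> unit_ball_vol TYPE('d) * s ^ CARD('d) + pair_correlation_error x s N"
    using abs_ge_self[of "real (close_pairs x s N) / real N - unit_ball_vol TYPE('d) * s ^ CARD('d)"]
    by (simp add: pair_correlation_error_def)
  then have "real N * (real (close_pairs x s N) / real N)
      \<le> real N * (unit_ball_vol TYPE('d) * s ^ CARD('d) + pair_correlation_error x s N)"
    by (rule mult_left_mono) simp
  then show ?thesis
    using assms by (simp add: distrib_left)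
qed

lemma pair_sum_lens_step_upper_eq:
  fixes x :: "nat \<Rightarrow> real^'d" and \<tau> :: real and N M :: nat
  defines "\<rho> \<equiv> \<tau> / real N powr (1 / real CARD('d))"
  shows "(\<Sum>k\<in>{1..N}. \<Sum>k'\<in>{1..N} - {k}. lens_step_upper TYPE('d) \<rho> M (torus_dist (x k) (x k')))
           = (\<Sum>j<M. lens_step_coeff TYPE('d) \<rho> M j * real (close_pairs x (2 * \<tau> * real (Suc j) / real M) N))"
proof -
  have "radius_grid \<rho> M (Suc j) = 2 * \<tau> * real (Suc j) / real M / real N powr (1 / real CARD('d))" for j
    by (simp add: radius_grid_def \<rho>_def field_simps)
  then show ?thesis
    unfolding lens_step_upper_def sum_distrib_left close_pairs_eq_sum
    by (subst sum.swap) (simp add: sum.swap[of _ "{..<M}"])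
qed

lemma pair_sum_lens_step_upper_le:
  fixes x :: "nat \<Rightarrow> real^'d"
  assumes "0 < \<tau>" "0 < M" "0 < N"
  defines "\<rho> \<equiv> \<tau> / real N powr (1 / real CARD('d))"
  defines "V \<equiv> measure lborel (cball (0::real^'d) \<rho>)"
  shows "(\<Sum>k\<in>{1..N}. \<Sum>k'\<in>{1..N} - {k}. lens_step_upper TYPE('d) \<rho> M (torus_dist (x k) (x k')))
           \<le> (real N)\<^sup>2 * V\<^sup>2 * (1 + real CARD('d) * 2 ^ CARD('d) / real M)
             + real N * V * (\<Sum>j<M. pair_correlation_error x (2 * \<tau> * real (Suc j) / real M) N)"
proof -
  define c where "c = lens_step_coeff TYPE('d) \<rho> M"
  define s where "s j = 2 * \<tau> * real (Suc j) / real M" for j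
  define e where "e j = pair_correlation_error x (s j) N" for j
  have \<rho>: "0 < \<rho>"
    using assms(1,3) by (simp add: \<rho>_def)
  have c: "0 \<le> c j" "c j \<le> V" for j
    using \<rho> by (simp_all add: c_def V_def lens_step_coeff_nonneg lens_step_coeff_le)
  have ball: "measure lborel (cball (0::real^'d) (radius_grid \<rho> M (Suc j))) = unit_ball_vol TYPE('d) * s j ^ CARD('d) / real N" for j
    using measure_cball_eq[of "radius_grid \<rho> M (Suc j)", where 'd='d] radius_grid_nonneg[of \<rho> M "Suc j"] \<rho> assms(3)
    by (simp add: radius_grid_def \<rho>_def s_def unit_ball_vol_eq power_divide power_mult_distrib root_powr_power)
  have "(\<Sum>k\<in>{1..N}. \<Sum>k'\<in>{1..N} - {k}. lens_step_upper TYPE('d) \<rho> M (torus_dist (x k) (x k')))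
      = (\<Sum>j<M. c j * real (close_pairs x (s j) N))"
    unfolding c_def s_def \<rho>_def by (rule pair_sum_lens_step_upper_eq)
  also have "\<dots> \<le> (\<Sum>j<M. c j * (real N * (unit_ball_vol TYPE('d) * s j ^ CARD('d)) + real N * e j))"
    unfolding e_def using assms(3) by (intro sum_mono mult_left_mono c close_pairs_le)
  also have "\<dots> = (real N)\<^sup>2 * (\<Sum>j<M. c j * measure lborel (cball (0::real^'d) (radius_grid \<rho> M (Suc j))))
                 + real N * (\<Sum>j<M. c j * e j)"
    using assms(3) by (simp add: ball sum.distrib sum_distrib_left power2_eq_square field_simps)
  also have "\<dots> \<le> (real N)\<^sup>2 * (V\<^sup>2 * (1 + real CARD('d) * 2 ^ CARD('d) / real M)) + real N * (\<Sum>j<M. V * e j)"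
    unfolding c_def V_def using assms(2) \<rho> c
    by (intro add_mono mult_left_mono sum_mono mult_right_mono sum_lens_step_upper_measure_le)
       (auto simp: e_def pair_correlation_error_def c_def V_def)
  finally show ?thesis
    by (simp add: s_def e_def sum_distrib_left algebra_simps)
qed

definition low_frequencies :: "real \<Rightarrow> (real^'d) set" where
  "low_frequencies R = {l \<in> int_lattice. 1 \<le> norm l \<and> norm l \<le> R}"

lemma low_frequencies:
  "finite (low_frequencies R :: (real^'d) set)" "low_frequencies R \<subseteq> int_lattice" "0 \<notin> low_frequencies R"
proof -
  have "low_frequencies R \<subseteq> lattice_window R"
    unfolding low_frequencies_def lattice_window_def using component_le_norm_cart order_trans by blast
  then show "finite (low_frequencies R :: (real^'d) set)"
    using lattice_window(1) finite_subset by blast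
qed (auto simp: low_frequencies_def)

lemma exp_sum_energy_eq:
  "exp_sum_energy x t N = (\<Sum>l\<in>low_frequencies (real N powr (1 / real CARD('d)) / t).
      (norm (\<Sum>k=1..N. exp (complex_of_real (2 * pi * (l \<bullet> x k)) * \<i>)))\<^sup>2) / (real N)\<^sup>2"
  for x :: "nat \<Rightarrow> real^'d"
  unfolding exp_sum_energy_def low_frequencies_def by (simp add: sum_divide_distrib)

lemma exp_sum_energy_le:
  fixes x :: "nat \<Rightarrow> real^'d"
  assumes "0 < t" "0 < M" "0 < N" "t / 6 / real N powr (1 / real CARD('d)) < 1/4"
  defines "\<omega> \<equiv> unit_ball_vol TYPE('d)" and "\<tau> \<equiv> t / 6"
  shows "exp_sum_energy x t N \<le> 4 / (\<omega> * \<tau> ^ CARD('d)) + 4 * real CARD('d) * 2 ^ CARD('d) / real M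
           + 4 / (\<omega> * \<tau> ^ CARD('d)) * (\<Sum>j<M. pair_correlation_error x (2 * \<tau> * real (Suc j) / real M) N)"
proof -
  define n1 where "n1 = real N powr (1 / real CARD('d))"
  define \<rho> where "\<rho> = \<tau> / n1"
  define V where "V = measure lborel (cball (0::real^'d) \<rho>)"
  define K where "K = real CARD('d) * 2 ^ CARD('d)"
  define err where "err = (\<Sum>j<M. pair_correlation_error x (2 * \<tau> * real (Suc j) / real M) N)"
  define SS where "SS = (\<Sum>l\<in>low_frequencies (n1 / t). (norm (\<Sum>k=1..N. exp (complex_of_real (2 * pi * (l \<bullet> x k)) * \<i>)))\<^sup>2)"
  have n1: "0 < n1" "n1 ^ CARD('d) = real N"
    using assms(3) by (simp_all add: n1_def root_powr_power)
  have \<rho>: "0 < \<rho>" "\<rho> < 1/4"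
    using assms(1,4) n1 by (simp_all add: \<rho>_def \<tau>_def n1_def)
  have NV: "real N * V = \<omega> * \<tau> ^ CARD('d)"
    using measure_cball_eq[of \<rho>, where 'd='d] \<rho> n1 assms(3)
    by (simp add: V_def \<omega>_def unit_ball_vol_eq \<rho>_def power_divide)
  have V: "0 < V"
    unfolding V_def using content_cball_pos[of \<rho> "0::real^'d"] \<rho> by simp
  have lf: "finite (low_frequencies (n1 / t) :: (real^'d) set)" "low_frequencies (n1 / t) \<subseteq> int_lattice"
    "(0::real^'d) \<notin> low_frequencies (n1 / t)"
    by (rule low_frequencies)+
  have "norm l * \<rho> \<le> 1/6" if "l \<in> low_frequencies (n1 / t)" for l
    using that mult_right_mono[of "norm l" "n1 / t" \<rho>] \<rho> n1 assms(1)
    by (simp add: low_frequencies_def \<rho>_def \<tau>_def)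
  then have "V\<^sup>2 * (real N)\<^sup>2 + (V/2)\<^sup>2 * SS
      \<le> real N * V + (\<Sum>k\<in>{1..N}. \<Sum>k'\<in>{1..N} - {k}. lens_step_upper TYPE('d) \<rho> M (torus_dist (x k) (x k')))"
    unfolding SS_def V_def using \<rho> lf assms(2)
    by (intro exp_sums_le_pair_sum lens_step_bounds(2) lens_step_upper_antimono lens_step_upper_nonneg) auto
  also have "\<dots> \<le> real N * V + ((real N)\<^sup>2 * V\<^sup>2 * (1 + K / real M) + real N * V * err)"
    unfolding V_def K_def err_def \<rho>_def n1_def using assms(1-3)
    by (intro add_left_mono pair_sum_lens_step_upper_le) (simp_all add: \<tau>_def)
  finally have "(V/2)\<^sup>2 * SS \<le> real N * V + (real N)\<^sup>2 * V\<^sup>2 * (K / real M) + real N * V * err"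
    by (simp add: algebra_simps)
  then have "SS / (real N)\<^sup>2 \<le> 4 / (real N * V) * (real N * V + (real N)\<^sup>2 * V\<^sup>2 * (K / real M) + real N * V * err) / (real N * V)"
    using V assms(3) by (simp add: field_simps power2_eq_square)
  also have "\<dots> = 4 / (real N * V) + 4 * K / real M + 4 / (real N * V) * err"
    using V assms(3) by (simp add: field_simps power2_eq_square)
  finally show ?thesis
    by (simp add: exp_sum_energy_eq SS_def n1_def NV K_def err_def)
qed

lemma unit_ball_vol_pos: "0 < unit_ball_vol TYPE('d::finite)"
  unfolding unit_ball_vol_eq using content_cball_pos[of 1 "0::real^'d"] by simp

lemma pair_correlation_error_tendsto_0:
  fixes x :: "nat \<Rightarrow> real^'d"
  assumes "((\<lambda>N. real (close_pairs x s N) / real N) \<longlongrightarrow> unit_ball_vol TYPE('d) * s ^ CARD('d)) sequentially"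
  shows "((\<lambda>N. pair_correlation_error x s N) \<longlongrightarrow> 0) sequentially"
  unfolding pair_correlation_error_def using tendsto_rabs_zero[OF LIM_zero[OF assms]] by simp

lemma eventually_div_root_less:
  assumes "0 < n" "0 < a"
  shows "eventually (\<lambda>N. c / real N powr (1 / real n) < a) sequentially"
proof -
  have "((\<lambda>N. c * real N powr (- (1 / real n))) \<longlongrightarrow> c * 0) sequentially"
    using assms(1) by (intro tendsto_mult_left tendsto_neg_powr filterlim_real_sequentially) auto
  then have "eventually (\<lambda>N. c * real N powr (- (1 / real n)) < a) sequentially"
    using assms(2) by (simp add: order_tendstoD(2))
  then show ?thesis
    by (simp add: powr_minus_divide)
qed

lemma sum_pair_correlation_error_tendsto_0:
  fixes x :: "nat \<Rightarrow> real^'d"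
  assumes "0 < \<tau>" "2 * \<tau> < t"
    and pc: "\<And>s. 0 < s \<Longrightarrow> s < t \<Longrightarrow>
      ((\<lambda>N. real (close_pairs x s N) / real N) \<longlongrightarrow> unit_ball_vol TYPE('d) * s ^ CARD('d)) sequentially"
  shows "((\<lambda>N. \<Sum>j<M. pair_correlation_error x (2 * \<tau> * real (Suc j) / real M) N) \<longlongrightarrow> 0) sequentially"
proof -
  have "0 < 2 * \<tau> * real (Suc j) / real M \<and> 2 * \<tau> * real (Suc j) / real M < t" if "j < M" for j
  proof -
    have "2 * \<tau> * real (Suc j) / real M \<le> 2 * \<tau>"
      using that assms(1) by (simp add: divide_le_eq)
    then show ?thesis
      using that assms(1,2) by simp
  qed
  then have "((\<lambda>N. \<Sum>j<M. pair_correlation_error x (2 * \<tau> * real (Suc j) / real M) N) \<longlongrightarrow> (\<Sum>j<M. 0)) sequentially"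
    by (intro tendsto_sum pair_correlation_error_tendsto_0 pc) auto
  then show ?thesis
    by simp
qed

lemma limsup_le_if_eventually_le:
  assumes "\<And>\<epsilon>. 0 < \<epsilon> \<Longrightarrow> eventually (\<lambda>N. f N \<le> B + \<epsilon>) sequentially"
  shows "limsup (\<lambda>N. ereal (f N)) \<le> ereal B"
proof (rule ereal_le_epsilon2)
  fix \<epsilon> :: real
  assume "0 < \<epsilon>"
  then have "Limsup sequentially (\<lambda>N. ereal (f N)) \<le> ereal (B + \<epsilon>)"
    using assms by (intro Limsup_bounded) (auto elim: eventually_mono)
  then show "limsup (\<lambda>N. ereal (f N)) \<le> ereal B + ereal \<epsilon>"
    by simp
qed

lemma exp_sum_energy_eventually_le:
  fixes x :: "nat \<Rightarrow> real^'d"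
  assumes "0 < t" "0 < \<epsilon>"
    and pc: "\<And>s. 0 < s \<Longrightarrow> s < t \<Longrightarrow>
      ((\<lambda>N. real (close_pairs x s N) / real N) \<longlongrightarrow> unit_ball_vol TYPE('d) * s ^ CARD('d)) sequentially"
  shows "eventually (\<lambda>N. exp_sum_energy x t N \<le> 4 * 6 ^ CARD('d) / unit_ball_vol TYPE('d) / t ^ CARD('d) + \<epsilon>) sequentially"
proof -
  define \<omega> where "\<omega> = unit_ball_vol TYPE('d)"
  define \<tau> where "\<tau> = t / 6"
  define K where "K = real CARD('d) * 2 ^ CARD('d)"
  define M where "M = nat \<lceil>8 * K / \<epsilon>\<rceil> + 1"
  define err where "err N = (\<Sum>j<M. pair_correlation_error x (2 * \<tau> * real (Suc j) / real M) N)" for N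
  have \<omega>: "0 < \<omega>"
    unfolding \<omega>_def by (rule unit_ball_vol_pos)
  have \<tau>: "0 < \<tau>"
    using assms(1) by (simp add: \<tau>_def)
  have M: "0 < M" "4 * K / real M \<le> \<epsilon> / 2"
  proof -
    have "8 * K / \<epsilon> \<le> real M"
      unfolding M_def by linarith
    then show "0 < M" "4 * K / real M \<le> \<epsilon> / 2"
      using assms(2) by (auto simp: M_def field_simps)
  qed
  have "(err \<longlongrightarrow> 0) sequentially"
    unfolding err_def using \<tau> assms(1) pc by (intro sum_pair_correlation_error_tendsto_0) (auto simp: \<tau>_def)
  then have "eventually (\<lambda>N. err N < \<epsilon> * (\<omega> * \<tau> ^ CARD('d)) / 8) sequentially"
    using assms(2) \<omega> \<tau> by (intro order_tendstoD(2)) auto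
  moreover have "eventually (\<lambda>N. t / 6 / real N powr (1 / real CARD('d)) < 1/4) sequentially"
    by (rule eventually_div_root_less) auto
  moreover have "eventually (\<lambda>N. 0 < N) sequentially"
    by (rule eventually_gt_at_top)
  ultimately show ?thesis
  proof eventually_elim
    case (elim N)
    have "exp_sum_energy x t N \<le> 4 / (\<omega> * \<tau> ^ CARD('d)) + 4 * K / real M + 4 / (\<omega> * \<tau> ^ CARD('d)) * err N"
      using exp_sum_energy_le[OF assms(1) M(1) elim(3) elim(2), of x]
      unfolding \<omega>_def \<tau>_def K_def err_def by (simp add: mult.assoc)
    also have "4 / (\<omega> * \<tau> ^ CARD('d)) * err N \<le> \<epsilon> / 2"
      using elim \<omega> \<tau> by (simp add: field_simps)
    also have "4 / (\<omega> * \<tau> ^ CARD('d)) = 4 * 6 ^ CARD('d) / \<omega> / t ^ CARD('d)"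
      by (simp add: \<tau>_def power_divide)
    finally show ?case
      using M(2) by (simp add: \<omega>_def)
  qed
qed

theorem theorem3:
  "\<exists>c>0. \<forall>t>0. \<forall>x :: nat \<Rightarrow> real^'d.
     (\<forall>s. 0 < s \<and> s < t \<longrightarrow>
        ((\<lambda>N. real (close_pairs x s N) / real N) \<longlongrightarrow>
            unit_ball_vol TYPE('d) * s ^ CARD('d)) sequentially)
     \<longrightarrow> limsup (\<lambda>N. ereal (exp_sum_energy x t N)) \<le> ereal (c / t ^ CARD('d))"
proof (intro exI[of _ "4 * 6 ^ CARD('d) / unit_ball_vol TYPE('d)"] conjI allI impI)
  show "0 < 4 * 6 ^ CARD('d) / unit_ball_vol TYPE('d)"
    using unit_ball_vol_pos[where 'd='d] by simp
  fix t :: real and x :: "nat \<Rightarrow> real^'d"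
  assume "0 < t" and "\<forall>s. 0 < s \<and> s < t \<longrightarrow>
    ((\<lambda>N. real (close_pairs x s N) / real N) \<longlongrightarrow> unit_ball_vol TYPE('d) * s ^ CARD('d)) sequentially"
  then show "limsup (\<lambda>N. ereal (exp_sum_energy x t N))
      \<le> ereal (4 * 6 ^ CARD('d) / unit_ball_vol TYPE('d) / t ^ CARD('d))"
    by (intro limsup_le_if_eventually_le exp_sum_energy_eventually_le) auto
qed

end
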